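(* Let $\mathcal{C}$ be a quasicategory. Then $\mathrm{Ex}\,\mathcal{C}$ is a Kan complex if and only if $\mathcal{C}^\sharp$ satisfies calculus of left fractions (CLF).
   Context: $\mathrm{Ex}$ is Kan's functor: $(\mathrm{Ex}\,X)_n=\mathrm{Hom}(\mathrm{sd}\,\Delta^n, X)$ where $\mathrm{sd}\,\Delta^n$ is the nerve of the poset of non-empty subsets of $[n]=\{0,\dots,n\}$ ordered by inclusion. $\mathcal{C}^\sharp$ denotes $\mathcal{C}$ with all $1$-simplices marked. A marked simplicial set is a pair $(X,W)$ with $W\subseteq X_1$ containing the degenerate $1$-simplices. For $n\ge 0$, $0\le k\le n$, $\mathrm{L}^n_k$ is the nerve of the poset of subsets $A\subseteq[n]$ with $k\in A$ ordered by inclusion, where $A_0\subseteq A_1$ is marked iff $\max A_0=\max A_1$; $\mathrm{LJ}^n_k\subseteq \mathrm{L}^n_k$ is the maximal simplicial subset not containing the vertex $[n]$. $W$ is weakly closed under composition if every map $\Lambda^2_1\to X$ with both edges marked extends to a $2$-simplex all of whose edges are marked. A marked quasicategory $(\mathcal{C},W)$ satisfies CLF if $W$ is weakly closed under composition and $(\mathcal{C},W)$ has the right lifting property (in marked simplicial sets) against all $\mathrm{LJ}^n_k\hookrightarrow\mathrm{L}^n_k$ with $n\ge2$, $0<k\le n$. *)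

theory Defs
  imports "HOL-Library.FuncSet"
begin

text \<open>A simplicial set with cells of type 'a: the set of n-simplices, and the
action of a simplicial operator f : [m] -> [n] (monotone) sending n-simplices
to m-simplices, written sact X m n f x.\<close>

record 'a sset =
  cells :: "nat \<Rightarrow> 'a set"
  sact  :: "nat \<Rightarrow> nat \<Rightarrow> (nat \<Rightarrow> nat) \<Rightarrow> 'a \<Rightarrow> 'a"

definition simp_op :: "nat \<Rightarrow> nat \<Rightarrow> (nat \<Rightarrow> nat) \<Rightarrow> bool" where
  "simp_op m n f \<longleftrightarrow> (\<forall>i\<in>{0..m}. f i \<le> n) \<and> (\<forall>i j. i \<le> j \<longrightarrow> j \<le> m \<longrightarrow> f i \<le> f j)"

definition is_sset :: "'a sset \<Rightarrow> bool" where
  "is_sset X \<longleftrightarrow>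
     (\<forall>m n f x. simp_op m n f \<longrightarrow> x \<in> cells X n \<longrightarrow> sact X m n f x \<in> cells X m) \<and>
     (\<forall>m n f g x. simp_op m n f \<longrightarrow> (\<forall>i\<in>{0..m}. f i = g i) \<longrightarrow> x \<in> cells X n
         \<longrightarrow> sact X m n f x = sact X m n g x) \<and>
     (\<forall>n x. x \<in> cells X n \<longrightarrow> sact X n n (\<lambda>i. i) x = x) \<and>
     (\<forall>k m n g f x. simp_op k m g \<longrightarrow> simp_op m n f \<longrightarrow> x \<in> cells X n
         \<longrightarrow> sact X k m g (sact X m n f x) = sact X k n (f \<circ> g) x)"

definition smap :: "'a sset \<Rightarrow> 'b sset \<Rightarrow> (nat \<Rightarrow> 'a \<Rightarrow> 'b) \<Rightarrow> bool" where
  "smap X Y F \<longleftrightarrow>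
     (\<forall>n x. x \<in> cells X n \<longrightarrow> F n x \<in> cells Y n) \<and>
     (\<forall>m n f x. simp_op m n f \<longrightarrow> x \<in> cells X n
         \<longrightarrow> F m (sact X m n f x) = sact Y m n f (F n x))"

definition ssub :: "'a sset \<Rightarrow> (nat \<Rightarrow> 'a set) \<Rightarrow> 'a sset" where
  "ssub X S = \<lparr>cells = S, sact = sact X\<rparr>"

definition nerve :: "'p set \<Rightarrow> ('p \<Rightarrow> 'p \<Rightarrow> bool) \<Rightarrow> (nat \<Rightarrow> 'p) sset" where
  "nerve P le = \<lparr>cells = (\<lambda>n. {\<sigma> \<in> extensional {0..n}. (\<forall>i\<in>{0..n}. \<sigma> i \<in> P) \<and>
                                  (\<forall>i j. i \<le> j \<longrightarrow> j \<le> n \<longrightarrow> le (\<sigma> i) (\<sigma> j))}),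
                 sact = (\<lambda>m n f \<sigma>. restrict (\<sigma> \<circ> f) {0..m})\<rparr>"

definition simplex :: "nat \<Rightarrow> (nat \<Rightarrow> nat) sset" ("\<Delta>") where
  "\<Delta> n = nerve {0..n} (\<le>)"

text \<open>Horn \<Lambda>^n_k: simplices of \<Delta>^n not containing all of [n] - {k} in their image
together with k, i.e. not hitting every face except the k-th.\<close>

definition horn :: "nat \<Rightarrow> nat \<Rightarrow> (nat \<Rightarrow> nat) sset" where
  "horn n k = ssub (\<Delta> n) (\<lambda>m. {\<sigma> \<in> cells (\<Delta> n) m. insert k (\<sigma> ` {0..m}) \<noteq> {0..n}})"

definition extends_along :: "'b sset \<Rightarrow> 'b sset \<Rightarrow> 'a sset \<Rightarrow> bool" where
  "extends_along A B X \<longleftrightarrow>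
     (\<forall>g. smap A X g \<longrightarrow> (\<exists>G. smap B X G \<and> (\<forall>m x. x \<in> cells A m \<longrightarrow> G m x = g m x)))"

definition kan_complex :: "'a sset \<Rightarrow> bool" where
  "kan_complex X \<longleftrightarrow> is_sset X \<and>
     (\<forall>n k. 1 \<le> n \<longrightarrow> k \<le> n \<longrightarrow> extends_along (horn n k) (\<Delta> n) X)"

definition quasicategory :: "'a sset \<Rightarrow> bool" where
  "quasicategory X \<longleftrightarrow> is_sset X \<and>
     (\<forall>n k. 0 < k \<longrightarrow> k < n \<longrightarrow> extends_along (horn n k) (\<Delta> n) X)"

definition sd :: "nat \<Rightarrow> (nat \<Rightarrow> nat set) sset" where
  "sd n = nerve {S. S \<noteq> {} \<and> S \<subseteq> {0..n}} (\<subseteq>)"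

text \<open>(Ex X)_n = Hom(sd \<Delta>^n, X) (maps taken extensionally); a simplicial operator
f : [m] -> [n] acts by precomposition with sd(f) : S \<mapsto> f ` S.\<close>

definition Ex :: "'a sset \<Rightarrow> (nat \<Rightarrow> (nat \<Rightarrow> nat set) \<Rightarrow> 'a) sset" where
  "Ex X = \<lparr>cells = (\<lambda>n. {F. smap (sd n) X F \<and>
                           (\<forall>k \<sigma>. \<sigma> \<notin> cells (sd n) k \<longrightarrow> F k \<sigma> = undefined)}),
           sact = (\<lambda>m n f F. (\<lambda>k \<sigma>. if \<sigma> \<in> cells (sd m) k
                                   then F k (restrict (\<lambda>i. f ` \<sigma> i) {0..k}) else undefined))\<rparr>"

type_synonym 'a msset = "'a sset \<times> 'a set"

definition is_msset :: "'a msset \<Rightarrow> bool" where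
  "is_msset XW \<longleftrightarrow> is_sset (fst XW) \<and> snd XW \<subseteq> cells (fst XW) 1 \<and>
     (\<forall>x\<in>cells (fst XW) 0. sact (fst XW) 1 0 (\<lambda>_. 0) x \<in> snd XW)"

definition mmap :: "'a msset \<Rightarrow> 'b msset \<Rightarrow> (nat \<Rightarrow> 'a \<Rightarrow> 'b) \<Rightarrow> bool" where
  "mmap A B F \<longleftrightarrow> smap (fst A) (fst B) F \<and> (\<forall>e\<in>snd A. F 1 e \<in> snd B)"

definition sharp :: "'a sset \<Rightarrow> 'a msset" where
  "sharp X = (X, cells X 1)"

definition Lmk :: "nat \<Rightarrow> nat \<Rightarrow> (nat \<Rightarrow> nat set) msset" where
  "Lmk n k = (let N = nerve {A. A \<subseteq> {0..n} \<and> k \<in> A} (\<subseteq>)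
              in (N, {\<sigma> \<in> cells N 1. Max (\<sigma> 0) = Max (\<sigma> 1)}))"

definition LJmk :: "nat \<Rightarrow> nat \<Rightarrow> (nat \<Rightarrow> nat set) msset" where
  "LJmk n k = (let S = (\<lambda>m. {\<sigma> \<in> cells (fst (Lmk n k)) m. {0..n} \<notin> \<sigma> ` {0..m}})
               in (ssub (fst (Lmk n k)) S, snd (Lmk n k) \<inter> S 1))"

definition weakly_closed_comp :: "'a msset \<Rightarrow> bool" where
  "weakly_closed_comp XW \<longleftrightarrow>
     (\<forall>h. smap (horn 2 1) (fst XW) h \<longrightarrow>
          (\<forall>e\<in>cells (horn 2 1) 1. h 1 e \<in> snd XW) \<longrightarrow>
          (\<exists>G. smap (\<Delta> 2) (fst XW) G \<and> (\<forall>m x. x \<in> cells (horn 2 1) m \<longrightarrow> G m x = h m x)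
               \<and> (\<forall>e\<in>cells (\<Delta> 2) 1. G 1 e \<in> snd XW)))"

definition mrlp :: "'b msset \<Rightarrow> 'b msset \<Rightarrow> 'a msset \<Rightarrow> bool" where
  "mrlp A B XW \<longleftrightarrow>
     (\<forall>g. mmap A XW g \<longrightarrow> (\<exists>G. mmap B XW G \<and> (\<forall>m x. x \<in> cells (fst A) m \<longrightarrow> G m x = g m x)))"

definition CLF :: "'a msset \<Rightarrow> bool" where
  "CLF XW \<longleftrightarrow> weakly_closed_comp XW \<and>
     (\<forall>n k. 2 \<le> n \<longrightarrow> 0 < k \<longrightarrow> k \<le> n \<longrightarrow> mrlp (LJmk n k) (Lmk n k) XW)"

end

theory Submission
  imports Defs
begin

(* A horn \<Lambda>^n_k -> Ex C is the same as a map sd \<Lambda>^n_k -> C, and a filler is an extension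
   of it to sd \<Delta>^n.

   To extend from sd \<Lambda>^n_k, first glue in the cube L^n_k of faces containing k: the two meet
   in LJ^n_k, so this is precisely a lifting problem of the calculus of left fractions (after
   transposing k and n when k = 0).  The chains still missing are the mixed ones, containing
   [n] and a face without k.  Such a chain Y and Y \<union> {x}, where x adds k to the largest
   face of Y without k, are filled together along an inner horn of C at the vertex x, in order
   of a rank that decreases when passing to faces.  Finally every face containing [n] - {k} is
   retracted to [n].

   Conversely, a lifting problem LJ^n_k -> C gives the horn \<sigma> |-> (S |-> {k} \<union> \<sigma>(S)) in Ex C,
   and the top simplex of a filler, restricted to L^n_k \<subseteq> sd \<Delta>^n, solves it.  All edges of
   C^\<sharp> are marked. *)

section \<open>Nerves of families of chains\<close>

text \<open>For downward closed K, face_nerve le K is the simplicial subset of the nerve of le spanned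
  by K; \<Delta>^n, its horns, sd \<Delta>^n and L^n_k are all of this form.\<close>

definition face_nerve :: "('p \<Rightarrow> 'p \<Rightarrow> bool) \<Rightarrow> 'p set set \<Rightarrow> (nat \<Rightarrow> 'p) sset" where
  "face_nerve le K = ssub (nerve UNIV le) (\<lambda>m. {\<sigma> \<in> cells (nerve UNIV le) m. \<sigma> ` {0..m} \<in> K})"

lemma face_nerve_cells:
  "\<sigma> \<in> cells (face_nerve le K) m \<longleftrightarrow> \<sigma> \<in> extensional {0..m} \<and>
     (\<forall>i j. i \<le> j \<longrightarrow> j \<le> m \<longrightarrow> le (\<sigma> i) (\<sigma> j)) \<and> \<sigma> ` {0..m} \<in> K"
  by (auto simp: face_nerve_def ssub_def nerve_def)

lemma face_nerve_sact [simp]: "sact (face_nerve le K) m n f \<sigma> = restrict (\<sigma> \<circ> f) {0..m}"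
  by (simp add: face_nerve_def ssub_def nerve_def)

lemma nerve_eq_face_nerve: "nerve P le = face_nerve le (Pow P)"
  unfolding face_nerve_def ssub_def nerve_def by (auto simp: fun_eq_iff image_subset_iff)

lemma simplex_eq_face_nerve: "\<Delta> n = face_nerve (\<le>) (Pow {0..n})"
  by (simp add: simplex_def nerve_eq_face_nerve)

lemma sd_eq_face_nerve: "sd n = face_nerve (\<subseteq>) (Pow {S. S \<noteq> {} \<and> S \<subseteq> {0..n}})"
  by (simp add: sd_def nerve_eq_face_nerve)

lemma horn_eq_face_nerve: "horn n k = face_nerve (\<le>) {Y. Y \<subseteq> {0..n} \<and> insert k Y \<noteq> {0..n}}"
  by (auto simp: horn_def simplex_eq_face_nerve face_nerve_def ssub_def nerve_def)

lemma smap_face_nerve_iff: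
  "smap (face_nerve le K) X G \<longleftrightarrow>
     (\<forall>m \<sigma>. \<sigma> \<in> cells (face_nerve le K) m \<longrightarrow> G m \<sigma> \<in> cells X m) \<and>
     (\<forall>m n f \<sigma>. simp_op m n f \<longrightarrow> \<sigma> \<in> cells (face_nerve le K) n \<longrightarrow>
        G m (restrict (\<sigma> \<circ> f) {0..m}) = sact X m n f (G n \<sigma>))"
  by (simp add: smap_def)

definition down_closed :: "'p set set \<Rightarrow> bool" where
  "down_closed K \<longleftrightarrow> (\<forall>Y\<in>K. \<forall>Z\<subseteq>Y. Z \<in> K)"

lemma down_closed_Pow [simp]: "down_closed (Pow A)"
  unfolding down_closed_def by blast

lemma image_restrict_comp_subset:
  "simp_op m n f \<Longrightarrow> restrict (\<sigma> \<circ> f) {0..m} ` {0..m} \<subseteq> \<sigma> ` {0..n}"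
  by (auto simp: simp_op_def)

lemma face_nerve_sact_cell:
  assumes \<sigma>: "\<sigma> \<in> cells (face_nerve le K) n" and f: "simp_op m n f" and K: "down_closed K"
  shows "restrict (\<sigma> \<circ> f) {0..m} \<in> cells (face_nerve le K) m"
proof -
  have "restrict (\<sigma> \<circ> f) {0..m} ` {0..m} \<in> K"
    using \<sigma> K image_restrict_comp_subset[OF f] unfolding face_nerve_cells down_closed_def by blast
  moreover have "le (\<sigma> (f i)) (\<sigma> (f j))" if "i \<le> j" "j \<le> m" for i j
    using \<sigma> f that unfolding face_nerve_cells simp_op_def by auto
  ultimately show ?thesis unfolding face_nerve_cells by auto
qed

lemma face_nerve_cells_mono: "K \<subseteq> K' \<Longrightarrow> cells (face_nerve le K) m \<subseteq> cells (face_nerve le K') m"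
  by (auto simp: face_nerve_cells)

lemma face_nerve_vertex: "\<sigma> \<in> cells (face_nerve le (Pow P)) m \<Longrightarrow> i \<le> m \<Longrightarrow> \<sigma> i \<in> P"
  unfolding face_nerve_cells by auto

lemma horn_cell_simplex_cell: "\<sigma> \<in> cells (horn n k) m \<Longrightarrow> \<sigma> \<in> cells (\<Delta> n) m"
  unfolding horn_eq_face_nerve simplex_eq_face_nerve by (rule subsetD[OF face_nerve_cells_mono]) auto

lemma face_nerve_cell_mono:
  "\<sigma> \<in> cells (face_nerve le K) n \<Longrightarrow> \<sigma> ` {0..n} \<in> K' \<Longrightarrow> \<sigma> \<in> cells (face_nerve le K') n"
  unfolding face_nerve_cells by auto

lemma face_nerve_chain:
  assumes "\<sigma> \<in> cells (face_nerve (\<subseteq>) K) m"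
  shows "chain\<^sub>\<subseteq> (\<sigma> ` {0..m})"
proof -
  have "\<sigma> i \<subseteq> \<sigma> j \<or> \<sigma> j \<subseteq> \<sigma> i" if "i \<le> m" "j \<le> m" for i j
    using assms that unfolding face_nerve_cells by (cases "i \<le> j") auto
  then show ?thesis unfolding chain_subset_def by auto
qed

lemma smap_face_nerve_restrict:
  assumes "smap (face_nerve le K) X G" "\<And>m \<sigma>. \<sigma> \<in> cells (face_nerve le K') m \<Longrightarrow> \<sigma> ` {0..m} \<in> K"
  shows "smap (face_nerve le K') X G"
proof -
  have "\<sigma> \<in> cells (face_nerve le K) m" if "\<sigma> \<in> cells (face_nerve le K') m" for m \<sigma>
    using face_nerve_cell_mono[OF that assms(2)[OF that]] .
  then show ?thesis using assms(1) unfolding smap_face_nerve_iff by blast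
qed

lemma smap_face_nerve_pullback:
  assumes G: "smap (face_nerve le' K') X G"
    and image: "\<forall>Y\<in>K. p ` Y \<in> K'"
    and mono: "\<forall>Y\<in>K. \<forall>a\<in>Y. \<forall>b\<in>Y. le a b \<longrightarrow> le' (p a) (p b)"
  shows "smap (face_nerve le K) X (\<lambda>m \<sigma>. G m (restrict (p \<circ> \<sigma>) {0..m}))"
proof -
  have cell: "restrict (p \<circ> \<sigma>) {0..m} \<in> cells (face_nerve le' K') m"
    if "\<sigma> \<in> cells (face_nerve le K) m" for \<sigma> m
  proof -
    have "restrict (p \<circ> \<sigma>) {0..m} ` {0..m} = p ` (\<sigma> ` {0..m})" by auto
    then show ?thesis using that image mono unfolding face_nerve_cells by auto
  qed
  have comm: "restrict (p \<circ> restrict (\<sigma> \<circ> f) {0..m}) {0..m}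
      = restrict (restrict (p \<circ> \<sigma>) {0..n} \<circ> f) {0..m}" if "simp_op m n f" for \<sigma> m n f
    using that by (auto simp: simp_op_def fun_eq_iff)
  show ?thesis
    unfolding smap_face_nerve_iff
  proof (intro conjI allI impI)
    fix m \<sigma> assume "\<sigma> \<in> cells (face_nerve le K) m"
    then show "G m (restrict (p \<circ> \<sigma>) {0..m}) \<in> cells X m"
      using G cell unfolding smap_face_nerve_iff by blast
  next
    fix m n f \<sigma> assume f: "simp_op m n f" and \<sigma>: "\<sigma> \<in> cells (face_nerve le K) n"
    show "G m (restrict (p \<circ> restrict (\<sigma> \<circ> f) {0..m}) {0..m})
        = sact X m n f (G n (restrict (p \<circ> \<sigma>) {0..n}))"
      unfolding comm[OF f] using G cell[OF \<sigma>] f unfolding smap_face_nerve_iff by blast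
  qed
qed

lemma smap_face_nerve_glue:
  assumes G1: "smap (face_nerve le K1) X G1" and G2: "smap (face_nerve le K2) X G2"
    and K1: "down_closed K1" and K2: "down_closed K2"
    and agree: "\<And>m \<sigma>. \<sigma> \<in> cells (face_nerve le (K1 \<inter> K2)) m \<Longrightarrow> G1 m \<sigma> = G2 m \<sigma>"
  shows "smap (face_nerve le (K1 \<union> K2)) X (\<lambda>m \<sigma>. if \<sigma> ` {0..m} \<in> K1 then G1 m \<sigma> else G2 m \<sigma>)"
  unfolding smap_face_nerve_iff
proof (intro conjI allI impI)
  fix m \<sigma> assume "\<sigma> \<in> cells (face_nerve le (K1 \<union> K2)) m"
  then have "\<sigma> \<in> cells (face_nerve le K1) m \<or> \<sigma> \<notin> cells (face_nerve le K1) m \<and>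
      \<sigma> \<in> cells (face_nerve le K2) m \<and> \<sigma> ` {0..m} \<notin> K1"
    unfolding face_nerve_cells by auto
  then show "(if \<sigma> ` {0..m} \<in> K1 then G1 m \<sigma> else G2 m \<sigma>) \<in> cells X m"
    using G1 G2 unfolding smap_face_nerve_iff face_nerve_cells by auto
next
  fix m n f \<sigma> assume f: "simp_op m n f" and \<sigma>: "\<sigma> \<in> cells (face_nerve le (K1 \<union> K2)) n"
  define \<tau> where "\<tau> = restrict (\<sigma> \<circ> f) {0..m}"
  have sub: "\<tau> ` {0..m} \<subseteq> \<sigma> ` {0..n}"
    unfolding \<tau>_def by (rule image_restrict_comp_subset[OF f])
  show "(if \<tau> ` {0..m} \<in> K1 then G1 m \<tau> else G2 m \<tau>) =
        sact X m n f (if \<sigma> ` {0..n} \<in> K1 then G1 n \<sigma> else G2 n \<sigma>)"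
  proof (cases "\<sigma> ` {0..n} \<in> K1")
    case True
    then have "\<tau> ` {0..m} \<in> K1" using sub K1 unfolding down_closed_def by blast
    then show ?thesis
      using True G1 face_nerve_cell_mono[OF \<sigma> True] f unfolding smap_face_nerve_iff \<tau>_def by auto
  next
    case False
    then have "\<sigma> ` {0..n} \<in> K2" using \<sigma> unfolding face_nerve_cells by auto
    then have \<sigma>2: "\<sigma> \<in> cells (face_nerve le K2) n" by (rule face_nerve_cell_mono[OF \<sigma>])
    have nat2: "G2 m \<tau> = sact X m n f (G2 n \<sigma>)"
      using G2 \<sigma>2 f unfolding smap_face_nerve_iff \<tau>_def by blast
    have "G1 m \<tau> = G2 m \<tau>" if "\<tau> ` {0..m} \<in> K1"
    proof (rule agree)
      have "\<tau> \<in> cells (face_nerve le K2) m"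
        unfolding \<tau>_def by (rule face_nerve_sact_cell[OF \<sigma>2 f K2])
      then show "\<tau> \<in> cells (face_nerve le (K1 \<inter> K2)) m"
        using that unfolding face_nerve_cells by auto
    qed
    then show ?thesis using False nat2 by auto
  qed
qed

lemma extends_along_refl: "extends_along A A X"
  unfolding extends_along_def by blast

lemma extends_along_trans:
  assumes "extends_along A B X" "extends_along B D X" "\<And>m. cells A m \<subseteq> cells B m"
  shows "extends_along A D X"
  unfolding extends_along_def
proof (intro allI impI)
  fix g assume "smap A X g"
  then obtain G where G: "smap B X G" "\<forall>m x. x \<in> cells A m \<longrightarrow> G m x = g m x"
    using assms(1) unfolding extends_along_def by blast
  then obtain H where H: "smap D X H" "\<forall>m x. x \<in> cells B m \<longrightarrow> H m x = G m x"
    using assms(2) unfolding extends_along_def by blast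
  have "H m x = g m x" if "x \<in> cells A m" for m x
    using G(2) H(2) that assms(3)[of m] by auto
  with H(1) show "\<exists>H. smap D X H \<and> (\<forall>m x. x \<in> cells A m \<longrightarrow> H m x = g m x)"
    by blast
qed

lemma extends_along_face_nerve_restrict:
  assumes "extends_along (face_nerve le K0) (face_nerve le K) X"
    and "\<And>m \<sigma>. \<sigma> \<in> cells (face_nerve le K') m \<Longrightarrow> \<sigma> ` {0..m} \<in> K"
  shows "extends_along (face_nerve le K0) (face_nerve le K') X"
  using assms(1) smap_face_nerve_restrict[OF _ assms(2)] unfolding extends_along_def by blast

text \<open>The data on K0 is moved to L0 by q, extended to L and pulled back to K by p;
  q \<circ> p = id on K0 makes the result extend the data.\<close>

lemma extends_along_face_nerve_transport:
  assumes ext: "extends_along (face_nerve le' L0) (face_nerve le' L) X"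
    and K0: "K0 \<subseteq> K"
    and p: "\<forall>Y\<in>K. p ` Y \<in> L" "\<forall>Y\<in>K0. p ` Y \<in> L0"
      "\<forall>Y\<in>K. \<forall>a\<in>Y. \<forall>b\<in>Y. le a b \<longrightarrow> le' (p a) (p b)"
    and q: "\<forall>Y\<in>L0. q ` Y \<in> K0" "\<forall>Y\<in>L0. \<forall>a\<in>Y. \<forall>b\<in>Y. le' a b \<longrightarrow> le (q a) (q b)"
    and qp: "\<forall>Y\<in>K0. \<forall>a\<in>Y. q (p a) = a"
  shows "extends_along (face_nerve le K0) (face_nerve le K) X"
  unfolding extends_along_def
proof (intro allI impI)
  fix g assume "smap (face_nerve le K0) X g"
  then have "smap (face_nerve le' L0) X (\<lambda>m \<sigma>. g m (restrict (q \<circ> \<sigma>) {0..m}))"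
    using q by (rule smap_face_nerve_pullback)
  then obtain G where G: "smap (face_nerve le' L) X G"
    and G_ext: "\<And>m \<sigma>. \<sigma> \<in> cells (face_nerve le' L0) m \<Longrightarrow> G m \<sigma> = g m (restrict (q \<circ> \<sigma>) {0..m})"
    using ext unfolding extends_along_def by blast
  have "smap (face_nerve le K) X (\<lambda>m \<sigma>. G m (restrict (p \<circ> \<sigma>) {0..m}))"
    using G p(1,3) by (rule smap_face_nerve_pullback)
  moreover have "G m (restrict (p \<circ> \<sigma>) {0..m}) = g m \<sigma>"
    if \<sigma>: "\<sigma> \<in> cells (face_nerve le K0) m" for m \<sigma>
  proof -
    have "restrict (p \<circ> \<sigma>) {0..m} ` {0..m} = p ` (\<sigma> ` {0..m})" by auto
    moreover have "le' (p (\<sigma> i)) (p (\<sigma> j))" if "i \<le> j" "j \<le> m" for i j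
      using \<sigma> that p(3) K0 unfolding face_nerve_cells by (meson atLeastAtMost_iff image_eqI le0 le_trans subsetD)
    ultimately have "restrict (p \<circ> \<sigma>) {0..m} \<in> cells (face_nerve le' L0) m"
      using \<sigma> p(2) unfolding face_nerve_cells by auto
    moreover have "restrict (q \<circ> restrict (p \<circ> \<sigma>) {0..m}) {0..m} = \<sigma>"
      using \<sigma> qp unfolding face_nerve_cells by (auto simp: fun_eq_iff extensional_def)
    ultimately show ?thesis using G_ext by simp
  qed
  ultimately show "\<exists>G. smap (face_nerve le K) X G \<and>
      (\<forall>m \<sigma>. \<sigma> \<in> cells (face_nerve le K0) m \<longrightarrow> G m \<sigma> = g m \<sigma>)" by blast
qed

lemma extends_along_face_nerve_retraction:
  assumes "Q \<subseteq> P" "\<forall>S\<in>P. \<rho> S \<in> Q" "\<forall>S\<in>Q. \<rho> S = S"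
    and "\<forall>a\<in>P. \<forall>b\<in>P. le a b \<longrightarrow> le (\<rho> a) (\<rho> b)"
  shows "extends_along (face_nerve le (Pow Q)) (face_nerve le (Pow P)) X"
proof (rule extends_along_face_nerve_transport[OF extends_along_refl,
      where le' = le and L = "Pow Q" and p = \<rho> and q = id])
  show "\<forall>Y\<in>Pow P. \<forall>a\<in>Y. \<forall>b\<in>Y. le a b \<longrightarrow> le (\<rho> a) (\<rho> b)"
    using assms(4) by blast
qed (use assms in auto)

lemma extends_along_face_nerve_iso:
  assumes ext: "extends_along (face_nerve le' L0) (face_nerve le' L) X"
    and e: "bij_betw e A B" "\<forall>a\<in>A. \<forall>b\<in>A. le (e a) (e b) \<longleftrightarrow> le' a b"
    and L: "L0 \<subseteq> L" "L \<subseteq> Pow A"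
  shows "extends_along (face_nerve le (image e ` L0)) (face_nerve le (image e ` L)) X"
proof -
  define r where "r = the_inv_into A e"
  have inj: "inj_on e A" using e(1) unfolding bij_betw_def by simp
  have r_e: "r (e a) = a" if "a \<in> A" for a
    unfolding r_def by (rule the_inv_into_f_f[OF inj that])
  have r_image: "r ` e ` Z = Z" if "Z \<in> L" for Z
  proof -
    have "\<forall>a\<in>Z. r (e a) = a" using that L(2) r_e by blast
    then show ?thesis by (simp add: image_image)
  qed
  show ?thesis
  proof (rule extends_along_face_nerve_transport[OF ext, where p = r and q = e])
    show "image e ` L0 \<subseteq> image e ` L" using L(1) by blast
    show "\<forall>Y\<in>image e ` L. r ` Y \<in> L" using r_image by auto
    show "\<forall>Y\<in>image e ` L0. r ` Y \<in> L0" using r_image L(1) by auto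
    show "\<forall>Y\<in>image e ` L. \<forall>a\<in>Y. \<forall>b\<in>Y. le a b \<longrightarrow> le' (r a) (r b)"
    proof (intro ballI impI)
      fix Y a b assume "Y \<in> image e ` L" "a \<in> Y" "b \<in> Y" "le a b"
      then obtain a' b' where "a' \<in> A" "b' \<in> A" "a = e a'" "b = e b'" "le (e a') (e b')"
        using L(2) by blast
      then show "le' (r a) (r b)" using e(2) r_e by simp
    qed
    show "\<forall>Y\<in>L0. e ` Y \<in> image e ` L0" by blast
    show "\<forall>Y\<in>L0. \<forall>a\<in>Y. \<forall>b\<in>Y. le' a b \<longrightarrow> le (e a) (e b)"
    proof (intro ballI impI)
      fix Y a b assume "Y \<in> L0" "a \<in> Y" "b \<in> Y" "le' a b"
      moreover have "Y \<subseteq> A" using \<open>Y \<in> L0\<close> L by blast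
      ultimately show "le (e a) (e b)" using e(2) by blast
    qed
    show "\<forall>Y\<in>image e ` L0. \<forall>a\<in>Y. e (r a) = a"
    proof (intro ballI)
      fix Y a assume "Y \<in> image e ` L0" "a \<in> Y"
      then obtain a' where "a' \<in> A" "a = e a'" using L by blast
      then show "e (r a) = a" using r_e by simp
    qed
  qed
qed

lemma extends_along_face_nerve_union:
  assumes K1: "down_closed K1" and K2: "down_closed K2"
    and ext: "extends_along (face_nerve le (K1 \<inter> K2)) (face_nerve le K2) X"
  shows "extends_along (face_nerve le K1) (face_nerve le (K1 \<union> K2)) X"
  unfolding extends_along_def
proof (intro allI impI)
  fix g assume g: "smap (face_nerve le K1) X g"
  then have "smap (face_nerve le (K1 \<inter> K2)) X g"
    by (rule smap_face_nerve_restrict) (auto simp: face_nerve_cells)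
  then obtain G2 where G2: "smap (face_nerve le K2) X G2"
    and agree: "\<And>m \<sigma>. \<sigma> \<in> cells (face_nerve le (K1 \<inter> K2)) m \<Longrightarrow> G2 m \<sigma> = g m \<sigma>"
    using ext unfolding extends_along_def by blast
  show "\<exists>G. smap (face_nerve le (K1 \<union> K2)) X G \<and>
      (\<forall>m \<sigma>. \<sigma> \<in> cells (face_nerve le K1) m \<longrightarrow> G m \<sigma> = g m \<sigma>)"
    using smap_face_nerve_glue[OF g G2 K1 K2] agree by (auto simp: face_nerve_cells)
qed

section \<open>Kan's Ex functor\<close>

lemma sd_cells:
  "\<tau> \<in> cells (sd n) l \<longleftrightarrow> \<tau> \<in> extensional {0..l} \<and>
     (\<forall>i j. i \<le> j \<longrightarrow> j \<le> l \<longrightarrow> \<tau> i \<subseteq> \<tau> j) \<and> (\<forall>i\<in>{0..l}. \<tau> i \<noteq> {} \<and> \<tau> i \<subseteq> {0..n})"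
  unfolding sd_eq_face_nerve face_nerve_cells by auto

lemma sd_image_cell:
  assumes \<tau>: "\<tau> \<in> cells (sd m) l" and f: "simp_op m n f"
  shows "restrict ((`) f \<circ> \<tau>) {0..l} \<in> cells (sd n) l"
proof -
  have "f ` \<tau> i \<noteq> {} \<and> f ` \<tau> i \<subseteq> {0..n}" if "i \<in> {0..l}" for i
    using \<tau> f that unfolding sd_cells simp_op_def by fastforce
  then show ?thesis using \<tau> unfolding sd_cells by (auto simp: image_mono)
qed

definition ex_cell :: "nat \<Rightarrow> (nat \<Rightarrow> (nat \<Rightarrow> nat set) \<Rightarrow> 'a) \<Rightarrow> nat \<Rightarrow> (nat \<Rightarrow> nat set) \<Rightarrow> 'a" where
  "ex_cell n \<Phi> = (\<lambda>l \<tau>. if \<tau> \<in> cells (sd n) l then \<Phi> l \<tau> else undefined)"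

lemma ex_cell_apply [simp]: "\<tau> \<in> cells (sd n) l \<Longrightarrow> ex_cell n \<Phi> l \<tau> = \<Phi> l \<tau>"
  by (simp add: ex_cell_def)

lemma ex_cell_cong:
  "(\<And>l \<tau>. \<tau> \<in> cells (sd n) l \<Longrightarrow> \<Phi> l \<tau> = \<Psi> l \<tau>) \<Longrightarrow> ex_cell n \<Phi> = ex_cell n \<Psi>"
  by (simp add: ex_cell_def fun_eq_iff)

lemma Ex_cells_iff: "F \<in> cells (Ex C) n \<longleftrightarrow> smap (sd n) C F \<and> ex_cell n F = F"
  by (auto simp: Ex_def ex_cell_def fun_eq_iff)

lemma Ex_sact_eq: "sact (Ex C) m n f F = ex_cell m (\<lambda>l \<tau>. F l (restrict ((`) f \<circ> \<tau>) {0..l}))"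
  by (simp add: Ex_def ex_cell_def comp_def)

lemma ex_cell_in_Ex:
  assumes \<Phi>: "smap (sd n) C \<Phi>"
  shows "ex_cell n \<Phi> \<in> cells (Ex C) n"
proof -
  have "smap (sd n) C (ex_cell n \<Phi>)"
    unfolding smap_def
  proof (intro conjI allI impI)
    fix l \<tau> assume "\<tau> \<in> cells (sd n) l"
    then show "ex_cell n \<Phi> l \<tau> \<in> cells C l" using \<Phi> unfolding smap_def by simp
  next
    fix l p f \<tau> assume f: "simp_op l p f" and \<tau>: "\<tau> \<in> cells (sd n) p"
    have "sact (sd n) l p f \<tau> \<in> cells (sd n) l"
      using face_nerve_sact_cell[OF \<tau>[unfolded sd_eq_face_nerve] f] by (simp add: sd_eq_face_nerve)
    then show "ex_cell n \<Phi> l (sact (sd n) l p f \<tau>) = sact C l p f (ex_cell n \<Phi> p \<tau>)"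
      using \<Phi> f \<tau> unfolding smap_def by simp
  qed
  moreover have "ex_cell n (ex_cell n \<Phi>) = ex_cell n \<Phi>"
    by (rule ex_cell_cong) simp
  ultimately show ?thesis unfolding Ex_cells_iff ..
qed

lemma sact_Ex_ex_cell:
  assumes "simp_op m n f"
  shows "sact (Ex C) m n f (ex_cell n \<Phi>) = ex_cell m (\<lambda>l \<tau>. \<Phi> l (restrict ((`) f \<circ> \<tau>) {0..l}))"
  unfolding Ex_sact_eq by (rule ex_cell_cong) (simp add: sd_image_cell[OF _ assms])

lemma smap_sd_image_pullback:
  assumes F: "smap (sd n) C F" and f: "simp_op m n f"
  shows "smap (sd m) C (\<lambda>l \<tau>. F l (restrict ((`) f \<circ> \<tau>) {0..l}))"
  using F unfolding sd_eq_face_nerve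
proof (rule smap_face_nerve_pullback)
  show "\<forall>Y\<in>Pow {S. S \<noteq> {} \<and> S \<subseteq> {0..m}}. (`) f ` Y \<in> Pow {S. S \<noteq> {} \<and> S \<subseteq> {0..n}}"
    using f unfolding simp_op_def by fastforce
qed auto

lemma Ex_sact_cell:
  assumes "F \<in> cells (Ex C) n" "simp_op m n f"
  shows "sact (Ex C) m n f F \<in> cells (Ex C) m"
proof -
  have "smap (sd m) C (\<lambda>l \<tau>. F l (restrict ((`) f \<circ> \<tau>) {0..l}))"
    using assms unfolding Ex_cells_iff by (blast intro: smap_sd_image_pullback)
  then show ?thesis unfolding Ex_sact_eq by (rule ex_cell_in_Ex)
qed

lemma is_sset_Ex: "is_sset (Ex C)"
  unfolding is_sset_def
proof (intro conjI allI impI)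
  fix m n f F assume "simp_op m n f" "F \<in> cells (Ex C) n"
  then show "sact (Ex C) m n f F \<in> cells (Ex C) m" by (rule Ex_sact_cell[rotated])
next
  fix m n :: nat and f g :: "nat \<Rightarrow> nat" and F assume fg: "\<forall>i\<in>{0..m}. f i = g i"
  have "restrict ((`) f \<circ> \<tau>) {0..l} = restrict ((`) g \<circ> \<tau>) {0..l}"
    if \<tau>: "\<tau> \<in> cells (sd m) l" for \<tau> l
  proof -
    have "f ` \<tau> i = g ` \<tau> i" if "i \<le> l" for i
    proof -
      have "\<tau> i \<subseteq> {0..m}" using \<tau> that unfolding sd_cells by auto
      then show ?thesis using fg by (intro image_cong) auto
    qed
    then show ?thesis by (auto simp: fun_eq_iff)
  qed
  then show "sact (Ex C) m n f F = sact (Ex C) m n g F"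
    unfolding Ex_sact_eq by (intro ex_cell_cong) simp
next
  fix n F assume F: "F \<in> cells (Ex C) n"
  have "restrict ((`) (\<lambda>i. i) \<circ> \<tau>) {0..l} = \<tau>" if "\<tau> \<in> cells (sd n) l" for \<tau> l
    using that unfolding sd_cells by (auto simp: fun_eq_iff extensional_def)
  then have "sact (Ex C) n n (\<lambda>i. i) F = ex_cell n F"
    unfolding Ex_sact_eq by (intro ex_cell_cong) simp
  also have "\<dots> = F" using F unfolding Ex_cells_iff by blast
  finally show "sact (Ex C) n n (\<lambda>i. i) F = F" .
next
  fix k m n g f F assume g: "simp_op k m g" and f: "simp_op m n f"
  have comp: "restrict ((`) f \<circ> restrict ((`) g \<circ> \<tau>) {0..l}) {0..l}
      = restrict ((`) (f \<circ> g) \<circ> \<tau>) {0..l}" for \<tau> l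
    by (auto simp: fun_eq_iff image_comp)
  have "sact (Ex C) k m g (sact (Ex C) m n f F)
      = sact (Ex C) k m g (ex_cell m (\<lambda>l \<tau>. F l (restrict ((`) f \<circ> \<tau>) {0..l})))"
    by (simp only: Ex_sact_eq[of C m n f])
  also have "\<dots> = ex_cell k (\<lambda>l \<tau>. F l (restrict ((`) (f \<circ> g) \<circ> \<tau>) {0..l}))"
    unfolding sact_Ex_ex_cell[OF g] comp ..
  also have "\<dots> = sact (Ex C) k n (f \<circ> g) F"
    by (simp only: Ex_sact_eq)
  finally show "sact (Ex C) k m g (sact (Ex C) m n f F) = sact (Ex C) k n (f \<circ> g) F" .
qed

definition top_simplex :: "nat \<Rightarrow> nat \<Rightarrow> nat" where
  "top_simplex n = restrict (\<lambda>i. i) {0..n}"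

lemma top_simplex_cell: "top_simplex n \<in> cells (\<Delta> n) n"
  unfolding top_simplex_def simplex_eq_face_nerve face_nerve_cells by auto

lemma simplex_cell_simp_op: "\<sigma> \<in> cells (\<Delta> n) m \<Longrightarrow> simp_op m n \<sigma>"
  unfolding simplex_eq_face_nerve face_nerve_cells simp_op_def by auto

lemma smap_simplex_eq_sact_top:
  assumes G: "smap (\<Delta> n) X G" and \<sigma>: "\<sigma> \<in> cells (\<Delta> n) m"
  shows "G m \<sigma> = sact X m n \<sigma> (G n (top_simplex n))"
proof -
  have "restrict (top_simplex n \<circ> \<sigma>) {0..m} = \<sigma>"
    using \<sigma> unfolding simplex_eq_face_nerve face_nerve_cells top_simplex_def
    by (fastforce simp: fun_eq_iff extensional_def image_subset_iff)
  moreover have "G m (sact (\<Delta> n) m n \<sigma> (top_simplex n)) = sact X m n \<sigma> (G n (top_simplex n))"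
    using G top_simplex_cell simplex_cell_simp_op[OF \<sigma>] unfolding smap_def by blast
  ultimately show ?thesis by (simp add: simplex_eq_face_nerve)
qed

lemma smap_simplex_sact:
  assumes X: "is_sset X" and x: "x \<in> cells X n"
  shows "smap (\<Delta> n) X (\<lambda>m \<sigma>. sact X m n \<sigma> x)"
  unfolding smap_def
proof (intro conjI allI impI)
  fix m \<sigma> assume "\<sigma> \<in> cells (\<Delta> n) m"
  then have "simp_op m n \<sigma>" by (rule simplex_cell_simp_op)
  then show "sact X m n \<sigma> x \<in> cells X m"
    using X x unfolding is_sset_def by simp
next
  fix m p f \<sigma> assume f: "simp_op m p f" and \<sigma>: "\<sigma> \<in> cells (\<Delta> n) p"
  have "restrict (\<sigma> \<circ> f) {0..m} \<in> cells (\<Delta> n) m"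
    using \<sigma> f unfolding simplex_eq_face_nerve by (rule face_nerve_sact_cell) simp
  then have "sact X m n (restrict (\<sigma> \<circ> f) {0..m}) x = sact X m n (\<sigma> \<circ> f) x"
    using X x simplex_cell_simp_op unfolding is_sset_def by simp
  also have "\<dots> = sact X m p f (sact X p n \<sigma> x)"
    using X x f simplex_cell_simp_op[OF \<sigma>] unfolding is_sset_def by simp
  finally show "sact X m n (sact (\<Delta> n) m p f \<sigma>) x = sact X m p f (sact X p n \<sigma> x)"
    by (simp add: simplex_eq_face_nerve)
qed

section \<open>Inner horns in a subdivided simplex\<close>

lemma finite_chain_enumeration:
  assumes "finite Y" "chain\<^sub>\<subseteq> Y"
  shows "\<exists>e. e ` {..<card Y} = Y \<and> (\<forall>i j. i < j \<longrightarrow> j < card Y \<longrightarrow> e i \<subset> e j)"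
  using assms
proof (induction "card Y" arbitrary: Y)
  case 0
  then show ?case by auto
next
  case (Suc n)
  define M where "M = \<Union>Y"
  have "Y \<noteq> {}" using Suc.hyps(2) by auto
  then have M: "M \<in> Y"
    using Union_in_chain Suc.prems unfolding M_def chain_subset_alt_def by blast
  have "n = card (Y - {M})"
    using Suc.hyps(2) M by (simp add: card_Diff_singleton)
  moreover have "chain\<^sub>\<subseteq> (Y - {M})"
    using Suc.prems(2) unfolding chain_subset_def by blast
  ultimately obtain e where e: "e ` {..<n} = Y - {M}" "\<forall>i j. i < j \<longrightarrow> j < n \<longrightarrow> e i \<subset> e j"
    using Suc.hyps(1)[of "Y - {M}"] Suc.prems(1) by blast
  have "e i \<subset> M" if "i < n" for i
    using e(1) that unfolding M_def by blast
  then have "\<forall>i j. i < j \<longrightarrow> j < Suc n \<longrightarrow> (e(n := M)) i \<subset> (e(n := M)) j"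
    using e(2) by (auto simp: less_Suc_eq)
  moreover have "(e(n := M)) ` {..<Suc n} = Y"
  proof -
    have "(e(n := M)) ` {..<n} = e ` {..<n}" by (rule image_cong) auto
    then have "(e(n := M)) ` {..<Suc n} = insert M (e ` {..<n})"
      unfolding lessThan_Suc image_insert by (simp only: fun_upd_same)
    then show ?thesis using e(1) M by auto
  qed
  ultimately show ?case unfolding Suc.hyps(2)[symmetric] by blast
qed

lemma finite_chain_order_iso:
  assumes "finite Y" "chain\<^sub>\<subseteq> Y" "Y \<noteq> {}"
  obtains N :: nat and e where "bij_betw e {0..N} Y" "\<And>i j. i \<le> N \<Longrightarrow> j \<le> N \<Longrightarrow> e i \<subseteq> e j \<longleftrightarrow> i \<le> j"
proof -
  obtain e where e: "e ` {..<card Y} = Y" "\<And>i j. i < j \<Longrightarrow> j < card Y \<Longrightarrow> e i \<subset> e j"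
    using finite_chain_enumeration[OF assms(1,2)] by blast
  define N where "N = card Y - 1"
  have card: "card Y = Suc N" using assms(1,3) unfolding N_def by (simp add: card_gt_0_iff)
  then have N: "{..<card Y} = {0..N}" by (simp add: lessThan_Suc_atMost atLeast0AtMost)
  have le: "e i \<subseteq> e j \<longleftrightarrow> i \<le> j" if ij: "i \<le> N" "j \<le> N" for i j
  proof
    assume "i \<le> j"
    then show "e i \<subseteq> e j" using e(2)[of i j] ij card by (cases "i = j") auto
  next
    assume ei: "e i \<subseteq> e j"
    show "i \<le> j"
    proof (rule ccontr)
      assume "\<not> i \<le> j"
      then have "e j \<subset> e i" using e(2)[of j i] ij card by auto
      then show False using ei by blast
    qed
  qed
  have "inj_on e {0..N}"
  proof (rule inj_onI)
    fix i j assume "i \<in> {0..N}" "j \<in> {0..N}" "e i = e j"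
    then have "i \<le> j" "j \<le> i" using le[of i j] le[of j i] by auto
    then show "i = j" by simp
  qed
  then have "bij_betw e {0..N} Y" using e(1) N by (simp add: bij_betw_def)
  then show ?thesis using le by (rule that)
qed

lemma bij_betw_image_horn_faces:
  assumes e: "bij_betw e A Y" and q: "q \<in> A"
  shows "image e ` {Z. Z \<subseteq> A \<and> insert q Z \<noteq> A} = Pow Y - {Y, Y - {e q}}"
proof -
  have inj: "inj_on e A" and img: "e ` A = Y" using e unfolding bij_betw_def by auto
  have full: "insert q Z = A \<longleftrightarrow> Y - {e q} \<subseteq> e ` Z" if Z: "Z \<subseteq> A" for Z
  proof
    assume "insert q Z = A"
    then have "e ` (A - {q}) \<subseteq> e ` Z" by (intro image_mono) blast
    moreover have "e ` (A - {q}) = Y - {e q}" using inj_on_image_set_diff[OF inj, of A "{q}"] q img by auto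
    ultimately show "Y - {e q} \<subseteq> e ` Z" by simp
  next
    assume sub: "Y - {e q} \<subseteq> e ` Z"
    have "a \<in> Z" if a: "a \<in> A" "a \<noteq> q" for a
    proof -
      have "e a \<noteq> e q" using inj a q unfolding inj_on_def by blast
      then have "e a \<in> e ` Z" using sub a(1) img by blast
      then show ?thesis using inj_on_image_mem_iff[OF inj a(1) Z] by simp
    qed
    then show "insert q Z = A" using Z q by blast
  qed
  show ?thesis
  proof
    show "image e ` {Z. Z \<subseteq> A \<and> insert q Z \<noteq> A} \<subseteq> Pow Y - {Y, Y - {e q}}"
    proof
      fix W assume "W \<in> image e ` {Z. Z \<subseteq> A \<and> insert q Z \<noteq> A}"
      then obtain Z where Z: "Z \<subseteq> A" "insert q Z \<noteq> A" "W = e ` Z" by blast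
      then have "W \<subseteq> Y" "\<not> Y - {e q} \<subseteq> W" using full[OF Z(1)] img by auto
      then show "W \<in> Pow Y - {Y, Y - {e q}}" by blast
    qed
    show "Pow Y - {Y, Y - {e q}} \<subseteq> image e ` {Z. Z \<subseteq> A \<and> insert q Z \<noteq> A}"
    proof
      fix W assume W: "W \<in> Pow Y - {Y, Y - {e q}}"
      then obtain Z where Z: "Z \<subseteq> A" "W = e ` Z" using img subset_image_iff[of W e A] by auto
      have "\<not> Y - {e q} \<subseteq> W" using W by blast
      then have "insert q Z \<noteq> A" using full[OF Z(1)] Z(2) by simp
      then show "W \<in> image e ` {Z. Z \<subseteq> A \<and> insert q Z \<noteq> A}" using Z by blast
    qed
  qed
qed

text \<open>The simplices of the barycentric subdivision spanned by a chain Y form a copy of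
  the simplex on Y; dropping Y and one inner face gives a copy of an inner horn.\<close>

lemma extends_along_chain_inner_horn:
  assumes C: "quasicategory C"
    and Y: "finite Y" "chain\<^sub>\<subseteq> Y"
    and x: "x \<in> Y" "a \<in> Y" "b \<in> Y" "a \<subset> x" "x \<subset> b"
  shows "extends_along (face_nerve (\<subseteq>) (Pow Y - {Y, Y - {x}})) (face_nerve (\<subseteq>) (Pow Y)) C"
proof -
  obtain N :: nat and e where e: "bij_betw e {0..N} Y"
    and e_le: "\<And>i j. i \<le> N \<Longrightarrow> j \<le> N \<Longrightarrow> e i \<subseteq> e j \<longleftrightarrow> i \<le> j"
    using finite_chain_order_iso[OF Y] x(1) by (metis empty_iff)
  have img: "e ` {0..N} = Y" using e unfolding bij_betw_def by simp
  then have "x \<in> e ` {0..N}" "a \<in> e ` {0..N}" "b \<in> e ` {0..N}" using x by auto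
  then obtain q i j where ij: "q \<le> N" "i \<le> N" "j \<le> N" "x = e q" "a = e i" "b = e j"
    by auto
  have "i < q" "q < j" using e_le[of q i] e_le[of j q] ij x(4,5) by auto
  then have "extends_along (horn N q) (\<Delta> N) C"
    using C ij(3) unfolding quasicategory_def by simp
  then have "extends_along (face_nerve (\<subseteq>) (image e ` {Z. Z \<subseteq> {0..N} \<and> insert q Z \<noteq> {0..N}}))
      (face_nerve (\<subseteq>) (image e ` Pow {0..N})) C"
    unfolding horn_eq_face_nerve simplex_eq_face_nerve
    by (rule extends_along_face_nerve_iso[OF _ e]) (use e_le in auto)
  moreover have "image e ` {Z. Z \<subseteq> {0..N} \<and> insert q Z \<noteq> {0..N}} = Pow Y - {Y, Y - {x}}"
    using bij_betw_image_horn_faces[OF e, of q] ij(1,4) by simp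
  ultimately show ?thesis unfolding image_Pow_surj[OF img] by simp
qed

section \<open>Extending from the subdivided horn\<close>

definition horn_vertices :: "nat \<Rightarrow> nat \<Rightarrow> nat set set" where
  "horn_vertices n k = {S. S \<noteq> {} \<and> S \<subseteq> {0..n} \<and> \<not> {0..n} - {k} \<subseteq> S}"

definition cube_vertices :: "nat \<Rightarrow> nat \<Rightarrow> nat set set" where
  "cube_vertices n k = {A. A \<subseteq> {0..n} \<and> k \<in> A}"

definition mixed_chain :: "nat \<Rightarrow> nat \<Rightarrow> nat set set \<Rightarrow> bool" where
  "mixed_chain n k Y \<longleftrightarrow> finite Y \<and> chain\<^sub>\<subseteq> Y \<and> Y \<subseteq> insert {0..n} (horn_vertices n k) \<and>
     {0..n} \<in> Y \<and> (\<exists>S\<in>Y. k \<notin> S)"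

definition kfree_max :: "nat \<Rightarrow> nat set set \<Rightarrow> nat set" where
  "kfree_max k Y = \<Union>{S\<in>Y. k \<notin> S}"

definition mixed_base :: "nat \<Rightarrow> nat set set \<Rightarrow> nat set set" where
  "mixed_base k Y = Y - {insert k (kfree_max k Y)}"

definition base_chain :: "nat \<Rightarrow> nat \<Rightarrow> nat set set \<Rightarrow> bool" where
  "base_chain n k Y \<longleftrightarrow> mixed_chain n k Y \<and> insert k (kfree_max k Y) \<notin> Y"

definition chain_rank :: "nat \<Rightarrow> nat set set \<Rightarrow> nat" where
  "chain_rank k Y = card Y + card {S\<in>Y. k \<notin> S}"

text \<open>A mixed chain Y arises from its base chain by possibly adding insert k (kfree_max k Y).
  Base chains are filled in order of chain_rank, each together with this extension.\<close>

definition mixed_faces :: "nat \<Rightarrow> nat \<Rightarrow> nat set set set \<Rightarrow> nat set set set" where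
  "mixed_faces n k Z = Pow (horn_vertices n k) \<union> Pow (cube_vertices n k) \<union>
     {X. mixed_chain n k X \<and> mixed_base k X \<in> Z}"

definition rank_closed :: "nat \<Rightarrow> nat \<Rightarrow> nat set set set \<Rightarrow> bool" where
  "rank_closed n k Z \<longleftrightarrow> (\<forall>Y\<in>Z. base_chain n k Y) \<and>
     (\<forall>Y\<in>Z. \<forall>Y0. base_chain n k Y0 \<longrightarrow> chain_rank k Y0 < chain_rank k Y \<longrightarrow> Y0 \<in> Z)"

lemma top_notin_horn_vertices: "{0..n} \<notin> horn_vertices n k"
  unfolding horn_vertices_def by auto

lemma kfree_max_mixed_chain:
  assumes "mixed_chain n k Y"
  shows "kfree_max k Y \<in> Y" "k \<notin> kfree_max k Y"
    and "\<And>S. S \<in> Y \<Longrightarrow> k \<notin> S \<Longrightarrow> S \<subseteq> kfree_max k Y"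
    and "\<And>S. S \<in> Y \<Longrightarrow> k \<in> S \<Longrightarrow> insert k (kfree_max k Y) \<subseteq> S"
proof -
  let ?L = "{S\<in>Y. k \<notin> S}"
  have "finite ?L" "?L \<noteq> {}" "subset.chain UNIV ?L"
    using assms unfolding mixed_chain_def chain_subset_def subset.chain_def by auto
  then have "\<Union>?L \<in> ?L" by (rule Union_in_chain)
  then show M: "kfree_max k Y \<in> Y" "k \<notin> kfree_max k Y" unfolding kfree_max_def by auto
  show "\<And>S. S \<in> Y \<Longrightarrow> k \<notin> S \<Longrightarrow> S \<subseteq> kfree_max k Y" unfolding kfree_max_def by auto
  fix S assume S: "S \<in> Y" "k \<in> S"
  have "S \<subseteq> kfree_max k Y \<or> kfree_max k Y \<subseteq> S"
    using assms M(1) S(1) unfolding mixed_chain_def chain_subset_def by blast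
  then show "insert k (kfree_max k Y) \<subseteq> S" using S M(2) by auto
qed

lemma kfree_max_mixed_base: "kfree_max k (mixed_base k Y) = kfree_max k Y"
  unfolding kfree_max_def mixed_base_def by auto

lemma mixed_base_cases:
  "mixed_base k X = Y \<Longrightarrow> X = Y \<or> X = insert (insert k (kfree_max k Y)) Y"
  using kfree_max_mixed_base[of k X] unfolding mixed_base_def by auto

lemma chain_rank_mixed_base_mono:
  assumes m1: "mixed_chain n k X1" and m2: "mixed_chain n k X2" and sub: "X1 \<subseteq> X2"
  shows "chain_rank k (mixed_base k X1) < chain_rank k (mixed_base k X2) \<or>
    mixed_base k X1 = mixed_base k X2"
proof -
  have fin: "finite X2" using m2 unfolding mixed_chain_def by simp
  have kfree: "{S\<in>mixed_base k X. k \<notin> S} = {S\<in>X. k \<notin> S}" for X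
    unfolding mixed_base_def by auto
  have kfree_sub: "{S\<in>X1. k \<notin> S} \<subseteq> {S\<in>X2. k \<notin> S}" using sub by auto
  have kfree_le: "card {S\<in>X1. k \<notin> S} \<le> card {S\<in>X2. k \<notin> S}"
    using fin kfree_sub by (auto intro: card_mono)
  show ?thesis
  proof (cases "kfree_max k X1 = kfree_max k X2")
    case True
    then have bsub: "mixed_base k X1 \<subseteq> mixed_base k X2"
      using sub unfolding mixed_base_def by auto
    have "card (mixed_base k X1) < card (mixed_base k X2)" if "mixed_base k X1 \<noteq> mixed_base k X2"
      using that bsub fin unfolding mixed_base_def by (auto intro: psubset_card_mono)
    then show ?thesis using kfree_le unfolding chain_rank_def kfree by fastforce
  next
    case False
    have M2: "kfree_max k X2 \<in> X2" "k \<notin> kfree_max k X2"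
      using kfree_max_mixed_chain[OF m2] by auto
    have M2n: "kfree_max k X2 \<notin> X1"
    proof
      assume "kfree_max k X2 \<in> X1"
      then have "kfree_max k X2 \<subseteq> kfree_max k X1" using kfree_max_mixed_chain(3)[OF m1] M2 by simp
      moreover have "kfree_max k X1 \<subseteq> kfree_max k X2" using sub unfolding kfree_max_def by auto
      ultimately show False using False by simp
    qed
    then have "{S\<in>X1. k \<notin> S} \<subset> {S\<in>X2. k \<notin> S}" using kfree_sub M2 by auto
    then have kfree_less: "card {S\<in>X1. k \<notin> S} < card {S\<in>X2. k \<notin> S}"
      using fin by (auto intro: psubset_card_mono)
    have "card (mixed_base k X1) \<le> card X1"
      using fin sub unfolding mixed_base_def by (auto intro: card_mono finite_subset)
    also have "\<dots> \<le> card (X2 - {kfree_max k X2})"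
      using M2n sub fin by (auto intro: card_mono)
    also have "\<dots> \<le> card (mixed_base k X2)"
      using M2 fin unfolding mixed_base_def by (simp add: card_Diff_singleton_if)
    finally show ?thesis using kfree_less unfolding chain_rank_def kfree by simp
  qed
qed

lemma mixed_faces_base:
  assumes "W \<subseteq> insert {0..n} (horn_vertices n k)" "\<not> mixed_chain n k W" "chain\<^sub>\<subseteq> W" "finite W"
  shows "W \<in> mixed_faces n k Z"
proof (cases "{0..n} \<in> W")
  case True
  then have "\<forall>S\<in>W. k \<in> S" using assms unfolding mixed_chain_def by auto
  then have "W \<subseteq> cube_vertices n k"
    using assms(1) unfolding cube_vertices_def horn_vertices_def by auto
  then show ?thesis unfolding mixed_faces_def by auto
next
  case False
  then show ?thesis using assms(1) unfolding mixed_faces_def by auto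
qed

lemma mixed_faces_subset_mixed_chain:
  assumes "mixed_chain n k X" "W \<subseteq> X" "\<not> mixed_chain n k W"
  shows "W \<in> mixed_faces n k Z"
proof (rule mixed_faces_base)
  show "W \<subseteq> insert {0..n} (horn_vertices n k)" "chain\<^sub>\<subseteq> W"
    using assms(1,2) unfolding mixed_chain_def chain_subset_def by blast+
  show "finite W" using assms(1) finite_subset[OF assms(2)] unfolding mixed_chain_def by blast
qed (rule assms(3))

lemma mixed_faces_mono: "Z \<subseteq> Z' \<Longrightarrow> mixed_faces n k Z \<subseteq> mixed_faces n k Z'"
  unfolding mixed_faces_def by auto

context
  fixes n k :: nat
  assumes k_le_n: "k \<le> n"
begin

lemma kfree_max_horn_vertices:
  assumes "mixed_chain n k Y"
  shows "kfree_max k Y \<in> horn_vertices n k" "insert k (kfree_max k Y) \<in> horn_vertices n k"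
proof -
  have M: "kfree_max k Y \<in> Y" "k \<notin> kfree_max k Y"
    using kfree_max_mixed_chain[OF assms] by auto
  then have "kfree_max k Y \<noteq> {0..n}" using k_le_n by auto
  then show MQ: "kfree_max k Y \<in> horn_vertices n k"
    using M assms unfolding mixed_chain_def by auto
  then show "insert k (kfree_max k Y) \<in> horn_vertices n k"
    using k_le_n unfolding horn_vertices_def by auto
qed

lemma base_chain_mixed_base:
  assumes "mixed_chain n k Y"
  shows "base_chain n k (mixed_base k Y)"
proof -
  have "insert k (kfree_max k Y) \<noteq> {0..n}"
    using kfree_max_horn_vertices(2)[OF assms] top_notin_horn_vertices by auto
  moreover have "kfree_max k Y \<in> Y" "k \<notin> kfree_max k Y"
    using kfree_max_mixed_chain[OF assms] by auto
  ultimately have "mixed_chain n k (mixed_base k Y)"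
    using assms unfolding mixed_base_def mixed_chain_def chain_subset_def
    by (auto intro: finite_subset)
  then show ?thesis unfolding base_chain_def kfree_max_mixed_base by (simp add: mixed_base_def)
qed

lemma mixed_chain_insert_base:
  assumes Y: "base_chain n k Y"
  shows "mixed_chain n k (insert (insert k (kfree_max k Y)) Y)" (is "mixed_chain n k ?Y'")
    and "mixed_base k (insert (insert k (kfree_max k Y)) Y) = Y"
proof -
  have mY: "mixed_chain n k Y" using Y unfolding base_chain_def by simp
  have "S \<subseteq> insert k (kfree_max k Y) \<or> insert k (kfree_max k Y) \<subseteq> S" if "S \<in> Y" for S
    using kfree_max_mixed_chain(3,4)[OF mY that] by (cases "k \<in> S") auto
  then have "chain\<^sub>\<subseteq> ?Y'" using mY unfolding mixed_chain_def chain_subset_def by blast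
  then show "mixed_chain n k ?Y'"
    using mY kfree_max_horn_vertices(2)[OF mY] unfolding mixed_chain_def by auto
  have "kfree_max k ?Y' = kfree_max k Y" unfolding kfree_max_def by auto
  then show "mixed_base k ?Y' = Y" using Y unfolding mixed_base_def base_chain_def by auto
qed

lemma down_closed_mixed_faces:
  assumes Z: "rank_closed n k Z"
  shows "down_closed (mixed_faces n k Z)"
  unfolding down_closed_def
proof (intro ballI allI impI)
  fix X W assume X: "X \<in> mixed_faces n k Z" and W: "W \<subseteq> X"
  show "W \<in> mixed_faces n k Z"
  proof (cases "X \<in> Pow (horn_vertices n k) \<union> Pow (cube_vertices n k)")
    case True
    then show ?thesis using W unfolding mixed_faces_def by auto
  next
    case False
    then have mX: "mixed_chain n k X" and bX: "mixed_base k X \<in> Z"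
      using X unfolding mixed_faces_def by auto
    show ?thesis
    proof (cases "mixed_chain n k W")
      case False
      then show ?thesis using mX W by (rule mixed_faces_subset_mixed_chain[rotated 2])
    next
      case True
      have "mixed_base k W \<in> Z"
        using chain_rank_mixed_base_mono[OF True mX W] Z bX base_chain_mixed_base[OF True]
        unfolding rank_closed_def by metis
      then show ?thesis using True unfolding mixed_faces_def by auto
    qed
  qed
qed

context
  fixes Z Y
  assumes Z: "rank_closed n k Z" and Y: "Y \<in> Z"
    and Y_max: "\<forall>Y1\<in>Z. chain_rank k Y1 \<le> chain_rank k Y"
begin

lemma base_chain_max: "base_chain n k Y"
  using Z Y unfolding rank_closed_def by blast

lemma rank_closed_remove_max: "rank_closed n k (Z - {Y})"
  unfolding rank_closed_def
proof (intro conjI ballI allI impI)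
  fix Y1 assume "Y1 \<in> Z - {Y}"
  then show "base_chain n k Y1" using Z unfolding rank_closed_def by auto
next
  fix Y1 Y0 assume Y1: "Y1 \<in> Z - {Y}" and "base_chain n k Y0" "chain_rank k Y0 < chain_rank k Y1"
  moreover have "chain_rank k Y1 \<le> chain_rank k Y" using Y1 Y_max by auto
  ultimately show "Y0 \<in> Z - {Y}" using Z unfolding rank_closed_def by auto
qed

lemma max_chain_notin_mixed_faces:
  "Y \<notin> mixed_faces n k (Z - {Y})"
  "insert (insert k (kfree_max k Y)) Y \<notin> mixed_faces n k (Z - {Y})"
proof -
  have mY: "mixed_chain n k Y" using base_chain_max unfolding base_chain_def by simp
  have "mixed_base k Y = Y" using base_chain_max unfolding base_chain_def mixed_base_def by simp
  moreover have "X \<notin> Pow (horn_vertices n k) \<union> Pow (cube_vertices n k)" if "Y \<subseteq> X" for X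
    using mY that top_notin_horn_vertices unfolding mixed_chain_def cube_vertices_def by auto
  ultimately show "Y \<notin> mixed_faces n k (Z - {Y})"
    "insert (insert k (kfree_max k Y)) Y \<notin> mixed_faces n k (Z - {Y})"
    unfolding mixed_faces_def using mixed_chain_insert_base(2)[OF base_chain_max]
    by (simp_all add: subset_insertI)
qed

lemma faces_in_mixed_faces:
  assumes W: "W \<subseteq> insert (insert k (kfree_max k Y)) Y" "W \<noteq> insert (insert k (kfree_max k Y)) Y"
    "W \<noteq> Y"
  shows "W \<in> mixed_faces n k (Z - {Y})"
proof -
  note mY' = mixed_chain_insert_base[OF base_chain_max]
  show ?thesis
  proof (cases "mixed_chain n k W")
    case False
    then show ?thesis using mY'(1) W(1) by (rule mixed_faces_subset_mixed_chain[rotated 2])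
  next
    case True
    have "mixed_base k W \<noteq> Y" using mixed_base_cases[of k W] W(2,3) by blast
    then have less: "chain_rank k (mixed_base k W) < chain_rank k Y"
      using chain_rank_mixed_base_mono[OF True mY'(1) W(1)] mY'(2) by auto
    then have "mixed_base k W \<in> Z"
      using Z Y base_chain_mixed_base[OF True] unfolding rank_closed_def by blast
    then show ?thesis using True less unfolding mixed_faces_def by auto
  qed
qed

lemma mixed_faces_remove_max:
  defines "Y' \<equiv> insert (insert k (kfree_max k Y)) Y"
  shows "mixed_faces n k Z = mixed_faces n k (Z - {Y}) \<union> Pow Y'"
    and "mixed_faces n k (Z - {Y}) \<inter> Pow Y' = Pow Y' - {Y', Y}"
proof -
  have "mixed_base k Y = Y" using base_chain_max unfolding base_chain_def mixed_base_def by simp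
  then have YY': "Y \<in> mixed_faces n k Z" "Y' \<in> mixed_faces n k Z"
    using Y base_chain_max mixed_chain_insert_base[OF base_chain_max] unfolding mixed_faces_def Y'_def base_chain_def by auto
  have "X \<in> Pow Y'" if "X \<in> mixed_faces n k Z" "X \<notin> mixed_faces n k (Z - {Y})" for X
    using that mixed_base_cases[of k X Y] unfolding mixed_faces_def Y'_def by auto
  moreover have "Pow Y' \<subseteq> mixed_faces n k Z"
    using YY' faces_in_mixed_faces mixed_faces_mono[of "Z - {Y}" Z n k] unfolding Y'_def by blast
  ultimately show "mixed_faces n k Z = mixed_faces n k (Z - {Y}) \<union> Pow Y'"
    using mixed_faces_mono[of "Z - {Y}" Z n k] by blast
  show "mixed_faces n k (Z - {Y}) \<inter> Pow Y' = Pow Y' - {Y', Y}"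
    using faces_in_mixed_faces max_chain_notin_mixed_faces unfolding Y'_def by blast
qed

lemma extends_along_mixed_faces_remove_max:
  assumes C: "quasicategory C"
  shows "extends_along (face_nerve (\<subseteq>) (mixed_faces n k (Z - {Y})))
    (face_nerve (\<subseteq>) (mixed_faces n k Z)) C"
proof -
  have mY: "mixed_chain n k Y" using base_chain_max unfolding base_chain_def by simp
  note M = kfree_max_mixed_chain[OF mY]
  define Y' where "Y' = insert (insert k (kfree_max k Y)) Y"
  have "extends_along (face_nerve (\<subseteq>) (Pow Y' - {Y', Y'- {insert k (kfree_max k Y)}}))
      (face_nerve (\<subseteq>) (Pow Y')) C"
  proof (rule extends_along_chain_inner_horn[OF C])
    show "finite Y'" "chain\<^sub>\<subseteq> Y'"
      using mixed_chain_insert_base(1)[OF base_chain_max] unfolding Y'_def mixed_chain_def by auto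
    show "kfree_max k Y \<subset> insert k (kfree_max k Y)" using M(2) by auto
    show "insert k (kfree_max k Y) \<subset> {0..n}"
      using kfree_max_horn_vertices(2)[OF mY] top_notin_horn_vertices
      unfolding horn_vertices_def by auto
  qed (use M(1) mY in \<open>auto simp: Y'_def mixed_chain_def\<close>)
  moreover have "Y' - {insert k (kfree_max k Y)} = Y"
    using base_chain_max unfolding Y'_def base_chain_def by auto
  ultimately show ?thesis
    using extends_along_face_nerve_union[OF down_closed_mixed_faces[OF rank_closed_remove_max]
        down_closed_Pow, of "(\<subseteq>)" Y' C]
    using mixed_faces_remove_max unfolding Y'_def by simp
qed

end

lemma extends_along_mixed_faces:
  assumes C: "quasicategory C"
  shows "finite Z \<Longrightarrow> rank_closed n k Z \<Longrightarrow>
    extends_along (face_nerve (\<subseteq>) (mixed_faces n k {})) (face_nerve (\<subseteq>) (mixed_faces n k Z)) C"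
proof (induction "card Z" arbitrary: Z rule: less_induct)
  case less
  show ?case
  proof (cases "Z = {}")
    case True
    then show ?thesis by (simp add: extends_along_refl)
  next
    case False
    then have "Max (chain_rank k ` Z) \<in> chain_rank k ` Z"
      using less.prems(1) by (intro Max_in) auto
    then obtain Y where Y: "Y \<in> Z" "chain_rank k Y = Max (chain_rank k ` Z)" by auto
    then have Y_max: "\<forall>Y1\<in>Z. chain_rank k Y1 \<le> chain_rank k Y"
      using less.prems(1) by simp
    have IH: "extends_along (face_nerve (\<subseteq>) (mixed_faces n k {}))
        (face_nerve (\<subseteq>) (mixed_faces n k (Z - {Y}))) C"
      using less.hyps[OF card_Diff1_less[OF less.prems(1) Y(1)]] less.prems(1)
        rank_closed_remove_max[OF less.prems(2) Y(1) Y_max] by simp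
    have "cells (face_nerve (\<subseteq>) (mixed_faces n k {})) m
        \<subseteq> cells (face_nerve (\<subseteq>) (mixed_faces n k (Z - {Y}))) m" for m
      using mixed_faces_mono[of "{}" "Z - {Y}" n k] by (intro face_nerve_cells_mono) simp
    with IH extends_along_mixed_faces_remove_max[OF less.prems(2) Y(1) Y_max C]
    show ?thesis by (rule extends_along_trans)
  qed
qed

lemma extends_along_horn_cube_to_top:
  assumes C: "quasicategory C"
  shows "extends_along (face_nerve (\<subseteq>) (Pow (horn_vertices n k) \<union> Pow (cube_vertices n k)))
    (face_nerve (\<subseteq>) (Pow (insert {0..n} (horn_vertices n k)))) C"
proof -
  define Za where "Za = {Y. base_chain n k Y}"
  have "insert {0..n} (horn_vertices n k) \<subseteq> Pow {0..n}" unfolding horn_vertices_def by auto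
  then have "finite (Pow (insert {0..n} (horn_vertices n k)))" by (simp add: finite_subset)
  moreover have "Za \<subseteq> Pow (insert {0..n} (horn_vertices n k))"
    unfolding Za_def base_chain_def mixed_chain_def by auto
  ultimately have "finite Za" by (rule finite_subset[rotated])
  moreover have "rank_closed n k Za" unfolding rank_closed_def Za_def by auto
  moreover have "mixed_faces n k {} = Pow (horn_vertices n k) \<union> Pow (cube_vertices n k)"
    unfolding mixed_faces_def by auto
  ultimately have ext: "extends_along (face_nerve (\<subseteq>) (Pow (horn_vertices n k) \<union> Pow (cube_vertices n k)))
      (face_nerve (\<subseteq>) (mixed_faces n k Za)) C"
    using extends_along_mixed_faces[OF C] by metis
  show ?thesis
  proof (rule extends_along_face_nerve_restrict[OF ext])
    fix m \<sigma> assume \<sigma>: "\<sigma> \<in> cells (face_nerve (\<subseteq>) (Pow (insert {0..n} (horn_vertices n k)))) m"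
    have sub: "\<sigma> ` {0..m} \<subseteq> insert {0..n} (horn_vertices n k)"
      using \<sigma> unfolding face_nerve_cells by simp
    have ch: "chain\<^sub>\<subseteq> (\<sigma> ` {0..m})" by (rule face_nerve_chain[OF \<sigma>])
    show "\<sigma> ` {0..m} \<in> mixed_faces n k Za"
    proof (cases "mixed_chain n k (\<sigma> ` {0..m})")
      case True
      then show ?thesis using base_chain_mixed_base unfolding mixed_faces_def Za_def by simp
    next
      case False
      then show ?thesis using sub ch by (intro mixed_faces_base) auto
    qed
  qed
qed

end

lemma horn_vertices_one:
  assumes k: "k \<le> 1"
  shows "horn_vertices 1 k = {{k}}"
proof -
  have "{0..1} - {k} = {1 - k}" using k by (cases k) auto
  then have horn: "S \<in> horn_vertices 1 k \<longleftrightarrow> S \<noteq> {} \<and> S \<subseteq> {0..1} \<and> 1 - k \<notin> S" for S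
    unfolding horn_vertices_def by simp
  have "S \<in> horn_vertices 1 k \<longleftrightarrow> S = {k}" for S
  proof
    assume "S \<in> horn_vertices 1 k"
    then have S: "S \<noteq> {}" "S \<subseteq> {0..1}" "1 - k \<notin> S" using horn by blast+
    have "x = k" if "x \<in> S" for x
    proof -
      have "x = k \<or> x = 1 - k" using S(2) that k by auto
      then show ?thesis using S(3) that by blast
    qed
    then have "S \<subseteq> {k}" by blast
    then show "S = {k}" using S(1) by (simp add: subset_singleton_iff)
  next
    assume "S = {k}"
    moreover have "1 - k \<noteq> k" using k by (cases k) auto
    ultimately show "S \<in> horn_vertices 1 k" using horn[of "{k}"] k by simp
  qed
  then show ?thesis by blast
qed

lemma horn_vertices_Int_cube_vertices:
  "k \<le> n \<Longrightarrow> horn_vertices n k \<inter> cube_vertices n k = cube_vertices n k - {{0..n}}"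
  unfolding horn_vertices_def cube_vertices_def by auto

text \<open>The transposition of k and n identifies the cube of k with the cube of n; this covers
  k = 0, for which the calculus of left fractions poses no lifting problem.\<close>

lemma extends_along_cube_transpose:
  assumes k: "k \<le> n"
    and ext: "extends_along (face_nerve (\<subseteq>) (Pow (cube_vertices n n - {{0..n}})))
      (face_nerve (\<subseteq>) (Pow (cube_vertices n n))) C"
  shows "extends_along (face_nerve (\<subseteq>) (Pow (cube_vertices n k - {{0..n}})))
      (face_nerve (\<subseteq>) (Pow (cube_vertices n k))) C"
proof -
  define t where "t i = (if i = k then n else if i = n then k else i)" for i
  have tt: "t ` t ` A = A" for A
    by (auto simp: t_def image_iff split: if_splits)
  have "t i \<le> n \<longleftrightarrow> i \<le> n" for i
    using k by (auto simp: t_def)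
  then have t_le: "t ` A \<subseteq> {0..n} \<longleftrightarrow> A \<subseteq> {0..n}" for A
    by (auto simp: image_subset_iff subset_iff)
  have sub: "t ` {0..n} \<subseteq> {0..n}" using t_le by blast
  then have "t ` t ` {0..n} \<subseteq> t ` {0..n}" by (rule image_mono)
  then have t_top: "t ` {0..n} = {0..n}" using sub tt[of "{0..n}"] by blast
  have t_top_iff: "t ` A = {0..n} \<longleftrightarrow> A = {0..n}" for A
    using tt[of A] t_top by auto
  have "n = t i \<longleftrightarrow> i = k" for i by (auto simp: t_def)
  then have "n \<in> t ` A \<longleftrightarrow> k \<in> A" for A by (auto simp: image_iff)
  then have cube_kn: "t ` A \<in> cube_vertices n n \<longleftrightarrow> A \<in> cube_vertices n k" for A
    using t_le[of A] unfolding cube_vertices_def by simp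
  have cube_nk: "t ` A \<in> cube_vertices n k \<longleftrightarrow> A \<in> cube_vertices n n" for A
    using cube_kn[of "t ` A"] tt[of A] by simp
  show ?thesis
    by (rule extends_along_face_nerve_transport[OF ext, where p = "(`) t" and q = "(`) t"])
      (use cube_kn cube_nk t_top_iff tt in \<open>auto simp: image_mono\<close>)
qed

lemma extends_along_horn_to_sd:
  assumes C: "quasicategory C" and k: "k \<le> n" "1 \<le> n"
    and cube: "2 \<le> n \<Longrightarrow> extends_along (face_nerve (\<subseteq>) (Pow (cube_vertices n k - {{0..n}})))
      (face_nerve (\<subseteq>) (Pow (cube_vertices n k))) C"
  shows "extends_along (face_nerve (\<subseteq>) (Pow (horn_vertices n k))) (sd n) C"
proof (cases "n = 1")
  case True
  then show ?thesis
    unfolding sd_eq_face_nerve using horn_vertices_one[of k] k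
    by (intro extends_along_face_nerve_retraction[where \<rho> = "\<lambda>_. {k}"]) auto
next
  case False
  then have n: "2 \<le> n" using k by simp
  let ?Q = "horn_vertices n k" and ?L = "cube_vertices n k"
  have horn_cube: "extends_along (face_nerve (\<subseteq>) (Pow ?Q)) (face_nerve (\<subseteq>) (Pow ?Q \<union> Pow ?L)) C"
    using cube[OF n] horn_vertices_Int_cube_vertices[OF k(1)]
    by (intro extends_along_face_nerve_union) (simp_all flip: Pow_Int_eq)
  have "extends_along (face_nerve (\<subseteq>) (Pow ?Q \<union> Pow ?L))
      (face_nerve (\<subseteq>) (Pow (insert {0..n} ?Q))) C"
    by (rule extends_along_horn_cube_to_top[OF k(1) C])
  then have horn_top: "extends_along (face_nerve (\<subseteq>) (Pow ?Q))
      (face_nerve (\<subseteq>) (Pow (insert {0..n} ?Q))) C"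
    by (rule extends_along_trans[OF horn_cube]) (intro face_nerve_cells_mono; auto)
  have top_sd: "extends_along (face_nerve (\<subseteq>) (Pow (insert {0..n} ?Q)))
      (face_nerve (\<subseteq>) (Pow {S. S \<noteq> {} \<and> S \<subseteq> {0..n}})) C"
  proof (rule extends_along_face_nerve_retraction
      [where \<rho> = "\<lambda>S. if {0..n} - {k} \<subseteq> S then {0..n} else S"])
    show "\<forall>a\<in>{S. S \<noteq> {} \<and> S \<subseteq> {0..n}}. \<forall>b\<in>{S. S \<noteq> {} \<and> S \<subseteq> {0..n}}. a \<subseteq> b \<longrightarrow>
        (if {0..n} - {k} \<subseteq> a then {0..n} else a) \<subseteq> (if {0..n} - {k} \<subseteq> b then {0..n} else b)"
      by auto
  qed (auto simp: horn_vertices_def)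
  show ?thesis
    unfolding sd_eq_face_nerve
    by (rule extends_along_trans[OF horn_top top_sd]) (intro face_nerve_cells_mono; auto)
qed

section \<open>Horns in Ex\<close>

definition retract_onto :: "nat set \<Rightarrow> nat \<Rightarrow> nat" where
  "retract_onto T i = (if \<exists>t\<in>T. i \<le> t then LEAST t. t \<in> T \<and> i \<le> t else Max T)"

lemma retract_onto_in: "finite T \<Longrightarrow> T \<noteq> {} \<Longrightarrow> retract_onto T i \<in> T"
  unfolding retract_onto_def by (auto intro: LeastI2_ex)

lemma retract_onto_fixed: "i \<in> T \<Longrightarrow> retract_onto T i = i"
  unfolding retract_onto_def by (auto intro!: Least_equality)

lemma retract_onto_mono:
  assumes T: "finite T" "T \<noteq> {}" and ij: "i \<le> j"
  shows "retract_onto T i \<le> retract_onto T j"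
proof (cases "\<exists>t\<in>T. j \<le> t")
  case True
  then have "j \<le> retract_onto T j" unfolding retract_onto_def by (auto intro: LeastI2_ex)
  then have "retract_onto T j \<in> T \<and> i \<le> retract_onto T j"
    using retract_onto_in[OF T] ij by simp
  then show ?thesis using True ij unfolding retract_onto_def[of T i]
    by (auto intro: Least_le)
next
  case False
  then have "retract_onto T j = Max T" unfolding retract_onto_def by simp
  then show ?thesis using retract_onto_in[OF T] T(1) by simp
qed

text \<open>The n-simplex of \<Delta>^n with vertex set T which moves each vertex up to the next one in T.\<close>

definition face_simplex :: "nat \<Rightarrow> nat set \<Rightarrow> nat \<Rightarrow> nat" where
  "face_simplex n T = restrict (retract_onto T) {0..n}"

context
  fixes n :: nat and T :: "nat set"
  assumes T: "T \<noteq> {}" "T \<subseteq> {0..n}"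
begin

lemma face_simplex_simp_op: "simp_op n n (face_simplex n T)"
proof -
  have "retract_onto T i \<le> n" for i
    using retract_onto_in[OF finite_subset[OF T(2) finite_atLeastAtMost] T(1)] T(2)
    by (meson atLeastAtMost_iff subsetD)
  then show ?thesis
    using retract_onto_mono[OF finite_subset[OF T(2) finite_atLeastAtMost] T(1)]
    unfolding simp_op_def face_simplex_def by auto
qed

lemma image_face_simplex: "S \<subseteq> T \<Longrightarrow> face_simplex n T ` S = S"
  using T(2) retract_onto_fixed unfolding face_simplex_def by (auto simp: subset_iff image_iff)

lemma face_simplex_image: "face_simplex n T ` {0..n} = T"
proof
  show "face_simplex n T ` {0..n} \<subseteq> T"
    using retract_onto_in[OF finite_subset[OF T(2) finite_atLeastAtMost] T(1)]
    unfolding face_simplex_def by auto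
  show "T \<subseteq> face_simplex n T ` {0..n}"
    using image_face_simplex[of T] T(2) by blast
qed

lemma face_simplex_comp:
  assumes "T' \<subseteq> T" "T' \<noteq> {}"
  shows "restrict (face_simplex n T \<circ> face_simplex n T') {0..n} = face_simplex n T'"
proof -
  have "T' \<subseteq> {0..n}" using assms(1) T(2) by blast
  then have "retract_onto T' i \<in> T'" for i
    using retract_onto_in[OF finite_subset[OF _ finite_atLeastAtMost] assms(2)] by blast
  then show ?thesis using assms(1) T(2) retract_onto_fixed
    unfolding face_simplex_def by (auto simp: fun_eq_iff subset_iff)
qed

lemma face_simplex_cell: "face_simplex n T \<in> cells (\<Delta> n) n"
  using face_simplex_simp_op face_simplex_image T(2)
  unfolding simplex_eq_face_nerve face_nerve_cells simp_op_def face_simplex_def by auto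

lemma Ex_sact_face_simplex:
  assumes \<tau>: "\<tau> \<in> cells (sd n) l" "\<forall>i\<le>l. \<tau> i \<subseteq> T"
  shows "sact (Ex C) n n (face_simplex n T) F l \<tau> = F l \<tau>"
proof -
  have "restrict ((`) (face_simplex n T) \<circ> \<tau>) {0..l} = \<tau>"
    using \<tau> image_face_simplex unfolding sd_cells by (auto simp: fun_eq_iff extensional_def)
  then show ?thesis using \<tau>(1) unfolding Ex_sact_eq by simp
qed

end

lemma smap_simplex_Ex_face_simplex:
  assumes G: "smap (\<Delta> n) (Ex C) G" and T: "T \<noteq> {}" "T \<subseteq> {0..n}"
    and \<tau>: "\<tau> \<in> cells (sd n) l" "\<forall>i\<le>l. \<tau> i \<subseteq> T"
  shows "G n (face_simplex n T) l \<tau> = G n (top_simplex n) l \<tau>"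
proof -
  have "G n (face_simplex n T) = sact (Ex C) n n (face_simplex n T) (G n (top_simplex n))"
    by (rule smap_simplex_eq_sact_top[OF G face_simplex_cell[OF T]])
  then show ?thesis using Ex_sact_face_simplex[OF T \<tau>] by simp
qed

lemma face_simplex_fixed: "t \<in> T \<Longrightarrow> T \<subseteq> {0..n} \<Longrightarrow> face_simplex n T t = t"
  unfolding face_simplex_def using retract_onto_fixed by auto

lemma horn_vertices_sd_cell:
  "\<sigma> \<in> cells (face_nerve (\<subseteq>) (Pow (horn_vertices n k))) m \<Longrightarrow> \<sigma> \<in> cells (sd n) m"
  unfolding sd_eq_face_nerve by (rule subsetD[OF face_nerve_cells_mono]) (auto simp: horn_vertices_def)

lemma horn_vertices_face:
  "T \<in> horn_vertices n k \<Longrightarrow> T \<noteq> {} \<and> T \<subseteq> {0..n} \<and> insert k T \<noteq> {0..n}"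
  unfolding horn_vertices_def by blast

lemma horn_vertices_subset: "T \<in> horn_vertices n k \<Longrightarrow> S \<subseteq> T \<Longrightarrow> S \<noteq> {} \<Longrightarrow> S \<in> horn_vertices n k"
  unfolding horn_vertices_def by blast

lemma horn_cell_image:
  assumes "k \<le> n" "\<sigma> \<in> cells (horn n k) m"
  shows "\<sigma> ` {0..m} \<in> horn_vertices n k"
  using assms unfolding horn_eq_face_nerve face_nerve_cells horn_vertices_def by auto

lemma face_simplex_horn_cell:
  assumes "T \<in> horn_vertices n k"
  shows "face_simplex n T \<in> cells (horn n k) n"
proof -
  note T = horn_vertices_face[OF assms]
  have "face_simplex n T i \<le> face_simplex n T j" if "i \<le> j" "j \<le> n" for i j
    using face_simplex_simp_op[of T n] T that unfolding simp_op_def by blast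
  moreover have "face_simplex n T ` {0..n} = T" using face_simplex_image[of T n] T by blast
  ultimately show ?thesis
    using T unfolding horn_eq_face_nerve face_nerve_cells face_simplex_def by auto
qed

lemma horn_Ex_face_simplex_indep:
  assumes h: "smap (horn n k) (Ex C) h" and T: "T \<in> horn_vertices n k"
    and T': "T' \<subseteq> T" "T' \<noteq> {}"
    and \<tau>: "\<tau> \<in> cells (sd n) l" "\<forall>i\<le>l. \<tau> i \<subseteq> T'"
  shows "h n (face_simplex n T') l \<tau> = h n (face_simplex n T) l \<tau>"
proof -
  note T_face = horn_vertices_face[OF T]
  have "T' \<subseteq> {0..n}" using T' T_face by blast
  have "h n (restrict (face_simplex n T \<circ> face_simplex n T') {0..n})
      = sact (Ex C) n n (face_simplex n T') (h n (face_simplex n T))"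
    using h face_simplex_horn_cell[OF T] face_simplex_simp_op[OF T'(2) \<open>T' \<subseteq> {0..n}\<close>]
    unfolding smap_def horn_eq_face_nerve face_nerve_sact by blast
  then have "h n (face_simplex n T') = sact (Ex C) n n (face_simplex n T') (h n (face_simplex n T))"
    using face_simplex_comp[OF conjunct1[OF T_face] conjunct1[OF conjunct2[OF T_face]] T'] by simp
  then show ?thesis using Ex_sact_face_simplex[OF T'(2) \<open>T' \<subseteq> {0..n}\<close> \<tau>] by simp
qed

lemma smap_horn_Ex_transpose:
  assumes h: "smap (horn n k) (Ex C) h"
  shows "smap (face_nerve (\<subseteq>) (Pow (horn_vertices n k))) C (\<lambda>l \<tau>. h n (face_simplex n (\<tau> l)) l \<tau>)"
  unfolding smap_face_nerve_iff
proof (intro conjI allI impI)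
  have sd_map: "smap (sd n) C (h n (face_simplex n T))" if "T \<in> horn_vertices n k" for T
    using h face_simplex_horn_cell[OF that] unfolding smap_def Ex_cells_iff by blast
  have top: "\<tau> l \<in> horn_vertices n k" "\<tau> \<in> cells (sd n) l"
    if "\<tau> \<in> cells (face_nerve (\<subseteq>) (Pow (horn_vertices n k))) l" for \<tau> l
    using face_nerve_vertex[OF that] horn_vertices_sd_cell[OF that] by auto
  fix l \<tau> assume "\<tau> \<in> cells (face_nerve (\<subseteq>) (Pow (horn_vertices n k))) l"
  then show "h n (face_simplex n (\<tau> l)) l \<tau> \<in> cells C l"
    using sd_map top unfolding smap_def by blast
next
  fix m l f \<tau> assume f: "simp_op m l f" and \<tau>: "\<tau> \<in> cells (face_nerve (\<subseteq>) (Pow (horn_vertices n k))) l"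
  define \<tau>' where "\<tau>' = restrict (\<tau> \<circ> f) {0..m}"
  have \<tau>': "\<tau>' \<in> cells (face_nerve (\<subseteq>) (Pow (horn_vertices n k))) m"
    unfolding \<tau>'_def by (rule face_nerve_sact_cell[OF \<tau> f down_closed_Pow])
  have T: "\<tau> l \<in> horn_vertices n k" and \<tau>_sd: "\<tau> \<in> cells (sd n) l"
    using face_nerve_vertex[OF \<tau>] horn_vertices_sd_cell[OF \<tau>] by auto
  have \<tau>'_sd: "\<tau>' \<in> cells (sd n) m" by (rule horn_vertices_sd_cell[OF \<tau>'])
  have sub: "\<tau>' m \<subseteq> \<tau> l" using \<tau> f unfolding \<tau>'_def face_nerve_cells simp_op_def by auto
  have "\<tau>' i \<subseteq> \<tau>' m" "\<tau>' m \<noteq> {}" if "i \<le> m" for i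
    using \<tau>' \<tau>'_sd that unfolding face_nerve_cells sd_cells by auto
  then have "h n (face_simplex n (\<tau>' m)) m \<tau>' = h n (face_simplex n (\<tau> l)) m \<tau>'"
    using horn_Ex_face_simplex_indep[OF h T sub _ \<tau>'_sd] by blast
  also have "\<dots> = sact C m l f (h n (face_simplex n (\<tau> l)) l \<tau>)"
    using h face_simplex_horn_cell[OF T] \<tau>_sd f
    unfolding smap_def Ex_cells_iff \<tau>'_def sd_eq_face_nerve face_nerve_sact by blast
  finally show "h n (face_simplex n (restrict (\<tau> \<circ> f) {0..m} m)) m (restrict (\<tau> \<circ> f) {0..m})
      = sact C m l f (h n (face_simplex n (\<tau> l)) l \<tau>)"
    unfolding \<tau>'_def .
qed

lemma horn_Ex_eq_sact_face_simplex:
  assumes h: "smap (horn n k) (Ex C) h" and k: "k \<le> n" and \<sigma>: "\<sigma> \<in> cells (horn n k) m"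
  shows "h m \<sigma> = sact (Ex C) m n \<sigma> (h n (face_simplex n (\<sigma> ` {0..m})))"
proof -
  define I where "I = \<sigma> ` {0..m}"
  have I: "I \<in> horn_vertices n k" unfolding I_def by (rule horn_cell_image[OF k \<sigma>])
  have \<sigma>_op: "simp_op m n \<sigma>" by (rule simplex_cell_simp_op[OF horn_cell_simplex_cell[OF \<sigma>]])
  have "face_simplex n I (\<sigma> i) = \<sigma> i" if "i \<le> m" for i
    using face_simplex_fixed[of "\<sigma> i" I n] horn_vertices_face[OF I] that unfolding I_def by auto
  moreover have "\<sigma> \<in> extensional {0..m}" using \<sigma> unfolding horn_eq_face_nerve face_nerve_cells by simp
  ultimately have "restrict (face_simplex n I \<circ> \<sigma>) {0..m} = \<sigma>"
    by (auto simp: fun_eq_iff extensional_def)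
  moreover have "h m (restrict (face_simplex n I \<circ> \<sigma>) {0..m}) = sact (Ex C) m n \<sigma> (h n (face_simplex n I))"
    using h face_simplex_horn_cell[OF I] \<sigma>_op
    unfolding smap_def horn_eq_face_nerve face_nerve_sact by blast
  ultimately show ?thesis unfolding I_def by simp
qed

lemma horn_Ex_eq_sact_ex_cell:
  assumes h: "smap (horn n k) (Ex C) h" and k: "k \<le> n"
    and \<Psi>_eq: "\<And>l \<tau>. \<tau> \<in> cells (face_nerve (\<subseteq>) (Pow (horn_vertices n k))) l \<Longrightarrow>
      \<Psi> l \<tau> = h n (face_simplex n (\<tau> l)) l \<tau>"
    and \<sigma>: "\<sigma> \<in> cells (horn n k) m"
  shows "sact (Ex C) m n \<sigma> (ex_cell n \<Psi>) = h m \<sigma>"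
proof -
  define I where "I = \<sigma> ` {0..m}"
  have I: "I \<in> horn_vertices n k" unfolding I_def by (rule horn_cell_image[OF k \<sigma>])
  have \<sigma>_op: "simp_op m n \<sigma>" by (rule simplex_cell_simp_op[OF horn_cell_simplex_cell[OF \<sigma>]])
  have "sact (Ex C) m n \<sigma> (ex_cell n \<Psi>) = ex_cell m (\<lambda>l \<tau>. \<Psi> l (restrict ((`) \<sigma> \<circ> \<tau>) {0..l}))"
    by (rule sact_Ex_ex_cell[OF \<sigma>_op])
  also have "\<dots> = ex_cell m (\<lambda>l \<tau>. h n (face_simplex n I) l (restrict ((`) \<sigma> \<circ> \<tau>) {0..l}))"
  proof (rule ex_cell_cong)
    fix l \<tau> assume \<tau>: "\<tau> \<in> cells (sd m) l"
    define \<tau>' where "\<tau>' = restrict ((`) \<sigma> \<circ> \<tau>) {0..l}"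
    have \<tau>'_sd: "\<tau>' \<in> cells (sd n) l" unfolding \<tau>'_def by (rule sd_image_cell[OF \<tau> \<sigma>_op])
    have \<tau>'_I: "\<tau>' i \<subseteq> I" if "i \<le> l" for i
    proof -
      have "\<tau> i \<subseteq> {0..m}" using \<tau> that unfolding sd_cells by auto
      then show ?thesis using that by (simp add: \<tau>'_def I_def image_mono)
    qed
    have "\<tau>' \<in> cells (face_nerve (\<subseteq>) (Pow (horn_vertices n k))) l"
      using \<tau>'_sd \<tau>'_I horn_vertices_subset[OF I] unfolding sd_cells face_nerve_cells by auto
    then have "\<Psi> l \<tau>' = h n (face_simplex n (\<tau>' l)) l \<tau>'" by (rule \<Psi>_eq)
    also have "\<dots> = h n (face_simplex n I) l \<tau>'"
      using \<tau>'_sd \<tau>'_I horn_Ex_face_simplex_indep[OF h I \<tau>'_I[of l] _ \<tau>'_sd]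
      unfolding sd_cells by auto
    finally show "\<Psi> l \<tau>' = h n (face_simplex n I) l \<tau>'" .
  qed
  also have "\<dots> = sact (Ex C) m n \<sigma> (h n (face_simplex n I))" by (simp only: Ex_sact_eq)
  also have "\<dots> = h m \<sigma>"
    unfolding I_def by (rule horn_Ex_eq_sact_face_simplex[OF h k \<sigma>, symmetric])
  finally show ?thesis .
qed

lemma extends_along_horn_Ex:
  assumes C: "quasicategory C" and k: "k \<le> n" "1 \<le> n"
    and cube: "2 \<le> n \<Longrightarrow> extends_along (face_nerve (\<subseteq>) (Pow (cube_vertices n k - {{0..n}})))
      (face_nerve (\<subseteq>) (Pow (cube_vertices n k))) C"
  shows "extends_along (horn n k) (\<Delta> n) (Ex C)"
  unfolding extends_along_def
proof (intro allI impI)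
  fix h assume h: "smap (horn n k) (Ex C) h"
  obtain \<Psi> where \<Psi>: "smap (sd n) C \<Psi>"
    and \<Psi>_eq: "\<And>l \<tau>. \<tau> \<in> cells (face_nerve (\<subseteq>) (Pow (horn_vertices n k))) l \<Longrightarrow>
      \<Psi> l \<tau> = h n (face_simplex n (\<tau> l)) l \<tau>"
    using extends_along_horn_to_sd[OF C k cube] smap_horn_Ex_transpose[OF h]
    unfolding extends_along_def by blast
  have "smap (\<Delta> n) (Ex C) (\<lambda>m \<sigma>. sact (Ex C) m n \<sigma> (ex_cell n \<Psi>))"
    using is_sset_Ex ex_cell_in_Ex[OF \<Psi>] by (rule smap_simplex_sact)
  then show "\<exists>G. smap (\<Delta> n) (Ex C) G \<and> (\<forall>m \<sigma>. \<sigma> \<in> cells (horn n k) m \<longrightarrow> G m \<sigma> = h m \<sigma>)"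
    using horn_Ex_eq_sact_ex_cell[OF h k(1) \<Psi>_eq] by blast
qed

lemma cube_horn_Ex_cell:
  assumes g: "smap (face_nerve (\<subseteq>) (Pow (cube_vertices n k - {{0..n}}))) C g" and k: "k \<le> n"
    and \<sigma>: "\<sigma> \<in> cells (horn n k) m"
  shows "ex_cell m (\<lambda>l \<tau>. g l (restrict ((\<lambda>S. insert k (\<sigma> ` S)) \<circ> \<tau>) {0..l})) \<in> cells (Ex C) m"
proof -
  have I: "\<sigma> ` {0..m} \<subseteq> {0..n}" "insert k (\<sigma> ` {0..m}) \<noteq> {0..n}"
    using \<sigma> unfolding horn_eq_face_nerve face_nerve_cells by auto
  have "smap (sd m) C (\<lambda>l \<tau>. g l (restrict ((\<lambda>S. insert k (\<sigma> ` S)) \<circ> \<tau>) {0..l}))"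
    using g unfolding sd_eq_face_nerve
  proof (rule smap_face_nerve_pullback)
    have cube: "insert k (\<sigma> ` S) \<in> cube_vertices n k - {{0..n}}" if "S \<subseteq> {0..m}" for S
    proof -
      have sub: "insert k (\<sigma> ` S) \<subseteq> insert k (\<sigma> ` {0..m})" using that by blast
      moreover have big: "insert k (\<sigma> ` {0..m}) \<subseteq> {0..n}" using I(1) k by simp
      ultimately have "insert k (\<sigma> ` S) \<noteq> {0..n}" using I(2) by blast
      then show ?thesis using sub big unfolding cube_vertices_def by blast
    qed
    show "\<forall>Y\<in>Pow {S. S \<noteq> {} \<and> S \<subseteq> {0..m}}.
        (\<lambda>S. insert k (\<sigma> ` S)) ` Y \<in> Pow (cube_vertices n k - {{0..n}})"
    proof (intro ballI PowI image_subsetI)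
      fix Y S assume "Y \<in> Pow {S. S \<noteq> {} \<and> S \<subseteq> {0..m}}" "S \<in> Y"
      then have "S \<subseteq> {0..m}" by blast
      then show "insert k (\<sigma> ` S) \<in> cube_vertices n k - {{0..n}}" by (rule cube)
    qed
  qed (auto simp: image_mono insert_mono)
  then show ?thesis by (rule ex_cell_in_Ex)
qed

lemma smap_horn_Ex_of_cube:
  assumes g: "smap (face_nerve (\<subseteq>) (Pow (cube_vertices n k - {{0..n}}))) C g" and k: "k \<le> n"
  shows "smap (horn n k) (Ex C)
    (\<lambda>m \<sigma>. ex_cell m (\<lambda>l \<tau>. g l (restrict ((\<lambda>S. insert k (\<sigma> ` S)) \<circ> \<tau>) {0..l})))"
  unfolding smap_def
proof (intro conjI allI impI)
  fix m \<sigma> assume "\<sigma> \<in> cells (horn n k) m"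
  then show "ex_cell m (\<lambda>l \<tau>. g l (restrict ((\<lambda>S. insert k (\<sigma> ` S)) \<circ> \<tau>) {0..l})) \<in> cells (Ex C) m"
    by (rule cube_horn_Ex_cell[OF g k])
next
  fix m p f \<sigma> assume f: "simp_op m p f" and "\<sigma> \<in> cells (horn n k) p"
  have "restrict ((\<lambda>S. insert k (restrict (\<sigma> \<circ> f) {0..m} ` S)) \<circ> \<tau>) {0..l}
      = restrict ((\<lambda>S. insert k (\<sigma> ` S)) \<circ> restrict ((`) f \<circ> \<tau>) {0..l}) {0..l}"
    if \<tau>: "\<tau> \<in> cells (sd m) l" for l \<tau>
  proof -
    have "restrict (\<sigma> \<circ> f) {0..m} ` \<tau> i = \<sigma> ` f ` \<tau> i" if "i \<le> l" for i
    proof -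
      have "\<tau> i \<subseteq> {0..m}" using \<tau> that unfolding sd_cells by auto
      then show ?thesis by (auto simp: image_iff subset_iff)
    qed
    then show ?thesis by (simp add: fun_eq_iff)
  qed
  then show "ex_cell m (\<lambda>l \<tau>. g l (restrict ((\<lambda>S. insert k (sact (horn n k) m p f \<sigma> ` S)) \<circ> \<tau>) {0..l}))
      = sact (Ex C) m p f (ex_cell p (\<lambda>l \<tau>. g l (restrict ((\<lambda>S. insert k (\<sigma> ` S)) \<circ> \<tau>) {0..l})))"
    unfolding sact_Ex_ex_cell[OF f] horn_eq_face_nerve face_nerve_sact
    by (intro ex_cell_cong) simp
qed

lemma filler_top_simplex_eq_cube:
  assumes G: "smap (\<Delta> n) (Ex C) G" and k: "k \<le> n"
    and G_h: "\<And>m \<sigma>. \<sigma> \<in> cells (horn n k) m \<Longrightarrow>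
      G m \<sigma> = ex_cell m (\<lambda>l \<tau>. g l (restrict ((\<lambda>S. insert k (\<sigma> ` S)) \<circ> \<tau>) {0..l}))"
    and \<tau>: "\<tau> \<in> cells (face_nerve (\<subseteq>) (Pow (cube_vertices n k - {{0..n}}))) l"
  shows "G n (top_simplex n) l \<tau> = g l \<tau>"
proof -
  define T where "T = \<tau> l"
  have T: "T \<in> horn_vertices n k"
    using face_nerve_vertex[OF \<tau>, of l] horn_vertices_Int_cube_vertices[OF k] unfolding T_def by auto
  note T_face = horn_vertices_face[OF T]
  have \<tau>_cube: "\<tau> i \<in> cube_vertices n k" "\<tau> i \<subseteq> T" if "i \<le> l" for i
    using \<tau> that face_nerve_vertex[OF \<tau> that] unfolding T_def face_nerve_cells by auto
  have \<tau>_sd: "\<tau> \<in> cells (sd n) l"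
    using \<tau> \<tau>_cube(1) unfolding sd_cells face_nerve_cells cube_vertices_def by auto
  have "restrict ((\<lambda>S. insert k (face_simplex n T ` S)) \<circ> \<tau>) {0..l} = \<tau>"
  proof -
    have "insert k (face_simplex n T ` \<tau> i) = \<tau> i" if "i \<le> l" for i
      using image_face_simplex[of T n "\<tau> i"] T_face \<tau>_cube[OF that] unfolding cube_vertices_def by auto
    then show ?thesis using \<tau> unfolding face_nerve_cells by (auto simp: fun_eq_iff extensional_def)
  qed
  then have "G n (face_simplex n T) l \<tau> = g l \<tau>"
    using G_h[OF face_simplex_horn_cell[OF T]] \<tau>_sd by simp
  moreover have "G n (face_simplex n T) l \<tau> = G n (top_simplex n) l \<tau>"
    using smap_simplex_Ex_face_simplex[OF G _ _ \<tau>_sd] T_face \<tau>_cube(2) by blast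
  ultimately show ?thesis by simp
qed

lemma extends_along_cube_of_kan_Ex:
  assumes kan: "kan_complex (Ex C)" and k: "k \<le> n" "1 \<le> n"
  shows "extends_along (face_nerve (\<subseteq>) (Pow (cube_vertices n k - {{0..n}})))
    (face_nerve (\<subseteq>) (Pow (cube_vertices n k))) C"
  unfolding extends_along_def
proof (intro allI impI)
  fix g assume g: "smap (face_nerve (\<subseteq>) (Pow (cube_vertices n k - {{0..n}}))) C g"
  then obtain G where G: "smap (\<Delta> n) (Ex C) G"
    and G_h: "\<And>m \<sigma>. \<sigma> \<in> cells (horn n k) m \<Longrightarrow>
      G m \<sigma> = ex_cell m (\<lambda>l \<tau>. g l (restrict ((\<lambda>S. insert k (\<sigma> ` S)) \<circ> \<tau>) {0..l}))"
    using kan k smap_horn_Ex_of_cube[OF g k(1)] unfolding kan_complex_def extends_along_def by blast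
  have "G n (top_simplex n) \<in> cells (Ex C) n" using G top_simplex_cell unfolding smap_def by blast
  then have "smap (sd n) C (G n (top_simplex n))" unfolding Ex_cells_iff by blast
  then have "smap (face_nerve (\<subseteq>) (Pow (cube_vertices n k))) C (G n (top_simplex n))"
    unfolding sd_eq_face_nerve
    by (rule smap_face_nerve_restrict) (auto simp: face_nerve_cells cube_vertices_def)
  then show "\<exists>G. smap (face_nerve (\<subseteq>) (Pow (cube_vertices n k))) C G \<and>
      (\<forall>m x. x \<in> cells (face_nerve (\<subseteq>) (Pow (cube_vertices n k - {{0..n}}))) m \<longrightarrow> G m x = g m x)"
    using filler_top_simplex_eq_cube[OF G k(1) G_h] by blast
qed

section \<open>Calculus of left fractions\<close>

lemma mmap_sharp_iff: "snd A \<subseteq> cells (fst A) 1 \<Longrightarrow> mmap A (sharp C) g \<longleftrightarrow> smap (fst A) C g"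
  unfolding mmap_def sharp_def smap_def by auto

lemma mrlp_sharp_iff:
  assumes "snd A \<subseteq> cells (fst A) 1" "snd B \<subseteq> cells (fst B) 1"
  shows "mrlp A B (sharp C) \<longleftrightarrow> extends_along (fst A) (fst B) C"
  unfolding mrlp_def extends_along_def mmap_sharp_iff[OF assms(1)] mmap_sharp_iff[OF assms(2)] ..

lemma cube_eq_face_nerve: "fst (Lmk n k) = face_nerve (\<subseteq>) (Pow (cube_vertices n k))"
  by (simp add: Lmk_def Let_def nerve_eq_face_nerve cube_vertices_def)

lemma cube_horn_eq_face_nerve:
  "fst (LJmk n k) = face_nerve (\<subseteq>) (Pow (cube_vertices n k - {{0..n}}))"
  unfolding LJmk_def Let_def cube_eq_face_nerve
  by (auto simp: face_nerve_def ssub_def nerve_def fun_eq_iff)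

lemma CLF_sharp_iff:
  "CLF (sharp C) \<longleftrightarrow> weakly_closed_comp (sharp C) \<and>
     (\<forall>n k. 2 \<le> n \<longrightarrow> 0 < k \<longrightarrow> k \<le> n \<longrightarrow>
        extends_along (face_nerve (\<subseteq>) (Pow (cube_vertices n k - {{0..n}})))
          (face_nerve (\<subseteq>) (Pow (cube_vertices n k))) C)"
proof -
  have "mrlp (LJmk n k) (Lmk n k) (sharp C) \<longleftrightarrow> extends_along (fst (LJmk n k)) (fst (Lmk n k)) C"
    for n k by (rule mrlp_sharp_iff) (auto simp: Lmk_def LJmk_def Let_def ssub_def)
  then show ?thesis unfolding CLF_def cube_eq_face_nerve cube_horn_eq_face_nerve by simp
qed

lemma weakly_closed_comp_sharp:
  assumes "quasicategory C"
  shows "weakly_closed_comp (sharp C)"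
  unfolding weakly_closed_comp_def
proof (intro allI impI)
  fix h assume "smap (horn 2 1) (fst (sharp C)) h"
  moreover have "extends_along (horn 2 1) (\<Delta> 2) C" using assms unfolding quasicategory_def by simp
  ultimately obtain G where G: "smap (\<Delta> 2) C G" "\<forall>m x. x \<in> cells (horn 2 1) m \<longrightarrow> G m x = h m x"
    unfolding extends_along_def sharp_def by auto
  moreover have "\<forall>e\<in>cells (\<Delta> 2) 1. G 1 e \<in> snd (sharp C)"
    using G(1) unfolding smap_def sharp_def by simp
  ultimately show "\<exists>G. smap (\<Delta> 2) (fst (sharp C)) G \<and>
      (\<forall>m x. x \<in> cells (horn 2 1) m \<longrightarrow> G m x = h m x) \<and> (\<forall>e\<in>cells (\<Delta> 2) 1. G 1 e \<in> snd (sharp C))"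
    unfolding sharp_def by auto
qed

theorem corollary9p7:
  fixes C :: "'a sset"
  assumes "quasicategory C"
  shows "kan_complex (Ex C) \<longleftrightarrow> CLF (sharp C)"
proof
  assume kan: "kan_complex (Ex C)"
  have "extends_along (face_nerve (\<subseteq>) (Pow (cube_vertices n k - {{0..n}})))
      (face_nerve (\<subseteq>) (Pow (cube_vertices n k))) C" if "2 \<le> n" "k \<le> n" for n k
    using extends_along_cube_of_kan_Ex[OF kan that(2)] that(1) by simp
  then show "CLF (sharp C)"
    unfolding CLF_sharp_iff using weakly_closed_comp_sharp[OF assms] by simp
next
  assume "CLF (sharp C)"
  then have "extends_along (face_nerve (\<subseteq>) (Pow (cube_vertices n n - {{0..n}})))
      (face_nerve (\<subseteq>) (Pow (cube_vertices n n))) C" if "2 \<le> n" for n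
    using that unfolding CLF_sharp_iff by simp
  then have "extends_along (face_nerve (\<subseteq>) (Pow (cube_vertices n k - {{0..n}})))
      (face_nerve (\<subseteq>) (Pow (cube_vertices n k))) C" if "2 \<le> n" "k \<le> n" for n k
    using extends_along_cube_transpose[OF that(2)] that(1) by blast
  then show "kan_complex (Ex C)"
    unfolding kan_complex_def using is_sset_Ex extends_along_horn_Ex[OF assms] by simp
qed

end
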